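(* Let $x_0\in\mathbb R^N$, $t_0>0$, and let $u$ be a $C^2$-solution of $(L_k-\partial_t^2)u=0$ ($L_k$ acting in $x$) defined in the cone $C(x_0,t_0)=\{(x,t)\in\mathbb R^N\times[0,\infty):|x-x_0|\le t_0-t\}$, satisfying $u(x,0)=u_t(x,0)=0$ for all $x$ with $|x-x_0|\le t_0$. Then $u$ vanishes identically in $C(x_0,t_0)$.
   Context: Let $R\subset\mathbb R^N$ be a reduced root system normalized by $\langle\alpha,\alpha\rangle=2$, $R_+$ a positive subsystem, and $k:R\to[0,\infty)$ a multiplicity function invariant under the reflection group of $R$. $w_k(x)=\prod_{\alpha\in R_+}|\langle\alpha,x\rangle|^{2k(\alpha)}$. $L_k$ is the operator $L_kf(x)=\Delta f(x)+2\sum_{\alpha\in R_+}k(\alpha)\frac{\langle\nabla f(x),\alpha\rangle}{\langle\alpha,x\rangle}$, equivalently $L_k=\frac1{w_k}\sum_{i=1}^N\partial_{x_i}(w_k\partial_{x_i})$. *)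

theory Defs
  imports "HOL-Analysis.Analysis"
begin

definition refl_root :: "'a::euclidean_space \<Rightarrow> 'a \<Rightarrow> 'a" where
  "refl_root \<alpha> x = x - ((2 * (\<alpha> \<bullet> x)) / (\<alpha> \<bullet> \<alpha>)) *\<^sub>R \<alpha>"

definition normalized_reduced_root_system :: "'a::euclidean_space set \<Rightarrow> bool" where
  "normalized_reduced_root_system R \<longleftrightarrow>
     finite R \<and> 0 \<notin> R \<and>
     (\<forall>\<alpha>\<in>R. \<forall>\<beta>\<in>R. refl_root \<alpha> \<beta> \<in> R) \<and>
     (\<forall>\<alpha>\<in>R. \<forall>c::real. c *\<^sub>R \<alpha> \<in> R \<longrightarrow> c = 1 \<or> c = -1) \<and>
     (\<forall>\<alpha>\<in>R. \<alpha> \<bullet> \<alpha> = 2)"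

definition positive_subsystem :: "'a::euclidean_space set \<Rightarrow> 'a set \<Rightarrow> bool" where
  "positive_subsystem R Rp \<longleftrightarrow>
     (\<exists>\<beta>. (\<forall>\<alpha>\<in>R. \<alpha> \<bullet> \<beta> \<noteq> 0) \<and> Rp = {\<alpha>\<in>R. \<alpha> \<bullet> \<beta> > 0})"

inductive_set reflection_group :: "'a::euclidean_space set \<Rightarrow> ('a \<Rightarrow> 'a) set"
  for R :: "'a set" where
  id_in: "id \<in> reflection_group R"
| refl_comp: "\<alpha> \<in> R \<Longrightarrow> g \<in> reflection_group R \<Longrightarrow> refl_root \<alpha> \<circ> g \<in> reflection_group R"

definition multiplicity_function :: "'a::euclidean_space set \<Rightarrow> ('a \<Rightarrow> real) \<Rightarrow> bool" where
  "multiplicity_function R k \<longleftrightarrow>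
     (\<forall>\<alpha>\<in>R. k \<alpha> \<ge> 0) \<and>
     (\<forall>g\<in>reflection_group R. \<forall>\<alpha>\<in>R. k (g \<alpha>) = k \<alpha>)"

definition light_cone :: "'a::euclidean_space \<Rightarrow> real \<Rightarrow> ('a \<times> real) set" where
  "light_cone x0 t0 = {(x, t). 0 \<le> t \<and> norm (x - x0) \<le> t0 - t}"

text \<open>(L_k - d_t^2) u at p = (x,t), expressed through the first and second
  Frechet derivatives Du p, D2u p of u (in all variables (x,t)).\<close>
definition dunkl_wave_op ::
  "'a::euclidean_space set \<Rightarrow> ('a \<Rightarrow> real) \<Rightarrow>
   (('a \<times> real) \<Rightarrow> ('a \<times> real) \<Rightarrow>\<^sub>L real) \<Rightarrow>
   (('a \<times> real) \<Rightarrow> ('a \<times> real) \<Rightarrow>\<^sub>L (('a \<times> real) \<Rightarrow>\<^sub>L real)) \<Rightarrow>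
   ('a \<times> real) \<Rightarrow> real" where
  "dunkl_wave_op Rp k Du D2u p =
     (\<Sum>b\<in>Basis. D2u p (b, 0) (b, 0))
     + 2 * (\<Sum>\<alpha>\<in>Rp. k \<alpha> * Du p (\<alpha>, 0) / (\<alpha> \<bullet> fst p))
     - D2u p (0, 1) (0, 1)"

end

theory Submission
  imports Defs
begin

text \<open>Energy method. For \<open>\<epsilon> > 0\<close> let \<open>w\<^sub>\<epsilon>(x) = \<Prod>\<^sub>\<alpha> ((\<alpha> \<bullet> x)\<^sup>2 + \<epsilon>)\<^bsup>k \<alpha>\<^esup>\<close>, a
  smooth positive approximation of the Dunkl weight \<open>w\<^sub>k\<close>, and let \<open>\<psi> = (max (s - \<delta>) 0)\<^sup>2\<close>
  with \<open>s = (t\<^sub>0 - t)\<^sup>2 - \<bar>x - x\<^sub>0\<bar>\<^sup>2\<close>, a \<open>C\<^sup>1\<close> cut-off supported strictly inside the cone.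
  The energy \<open>E(t) = \<integral> \<psi> w\<^sub>\<epsilon> (u\<^sub>t\<^sup>2 + \<bar>\<nabla>\<^sub>x u\<bar>\<^sup>2) dx\<close> vanishes at \<open>t = 0\<close>. Using the
  equation off the root hyperplanes and integrating the flux terms by parts,
  \<open>E'(t) \<le> C \<integral> \<Sum>\<^sub>\<alpha> \<epsilon> / ((\<alpha> \<bullet> x)\<^sup>2 + \<epsilon>) dx\<close>: the cut-off contributes a non-positive term
  because the cone is characteristic, and \<open>C\<close> does not depend on \<open>\<epsilon>\<close> because
  \<open>k \<alpha> \<partial>\<^sub>\<alpha>u / (\<alpha> \<bullet> x)\<close> stays bounded, the equation forcing \<open>\<partial>\<^sub>\<alpha>u\<close> to vanish on the
  hyperplane \<open>\<alpha> \<bullet> x = 0\<close> whenever \<open>k \<alpha> \<noteq> 0\<close>. As \<open>\<epsilon> \<rightarrow> 0\<close> the right-hand side tends to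
  zero by dominated convergence, whereas \<open>w\<^sub>\<epsilon> \<ge> w\<^sub>k\<close> keeps the energy away from zero near
  any regular point where \<open>u\<^sub>t \<noteq> 0\<close>. Hence \<open>u\<^sub>t = 0\<close> in the cone, and \<open>u = 0\<close> because
  \<open>u\<close> vanishes at \<open>t = 0\<close>.\<close>

section \<open>Calculus and integration\<close>

lemma has_derivative_blinfun_apply_const:
  fixes F :: "'a::real_normed_vector \<Rightarrow> 'b::real_normed_vector \<Rightarrow>\<^sub>L 'c::real_normed_vector"
  assumes "(F has_derivative blinfun_apply D) (at q within S)"
  shows "((\<lambda>q. F q v) has_derivative (\<lambda>h. D h v)) (at q within S)"
  using blinfun.FDERIV[OF assms has_derivative_const[of v]] by simp

lemma has_real_derivative_along_line:
  fixes f :: "'a::real_normed_vector \<Rightarrow> real"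
  assumes "(f has_derivative f') (at (a + r *\<^sub>R h) within S)" "\<And>s. s \<in> X \<Longrightarrow> a + s *\<^sub>R h \<in> S"
  shows "((\<lambda>s. f (a + s *\<^sub>R h)) has_real_derivative f' h) (at r within X)"
proof -
  have line: "((\<lambda>s. a + s *\<^sub>R h) has_derivative (\<lambda>s. s *\<^sub>R h)) (at r within X)"
    by (auto intro!: derivative_eq_intros)
  have "(f has_derivative f') (at (a + r *\<^sub>R h) within (\<lambda>s. a + s *\<^sub>R h) ` X)"
    by (rule has_derivative_subset[OF assms(1)]) (use assms(2) in auto)
  from diff_chain_within[OF line this]
  have "((\<lambda>s. f (a + s *\<^sub>R h)) has_derivative (\<lambda>s. f' (s *\<^sub>R h))) (at r within X)"
    by (simp add: o_def)
  moreover have "(\<lambda>s. f' (s *\<^sub>R h)) = (*) (f' h)"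
    using has_derivative_linear[OF assms(1)] by (auto simp: linear_scale)
  ultimately show ?thesis unfolding has_field_derivative_def by simp
qed

lemma mvt_segment:
  fixes f :: "'a::real_normed_vector \<Rightarrow> real"
  assumes "\<And>s. 0 \<le> s \<Longrightarrow> s \<le> 1 \<Longrightarrow> (f has_derivative f' s) (at (a + s *\<^sub>R h))"
  shows "\<exists>s\<in>{0<..<1}. f (a + h) - f a = f' s h"
proof -
  have "((\<lambda>s. f (a + s *\<^sub>R h)) has_derivative (*) (f' s h)) (at s within {0..1})"
    if "0 \<le> s" "s \<le> 1" for s
    using has_real_derivative_along_line[where S=UNIV and X="{0..1}", OF assms[OF that]]
    by (simp add: has_field_derivative_def)
  from mvt_simple[of 0 1, OF _ this] show ?thesis by simp
qed

text \<open>Two applications of the mean value theorem, first along \<open>k\<close> to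
  \<open>q \<mapsto> u (q + h) - u q\<close>, then along \<open>h\<close> to \<open>q \<mapsto> Du q k\<close>.\<close>
lemma second_difference_eq_second_derivative:
  fixes u :: "'a::real_normed_vector \<Rightarrow> real"
  assumes du: "\<And>q. q \<in> S \<Longrightarrow> (u has_derivative blinfun_apply (Du q)) (at q)"
    and d2: "\<And>q. q \<in> S \<Longrightarrow> (Du has_derivative blinfun_apply (D2 q)) (at q)"
    and S: "\<And>s \<sigma>. 0 \<le> s \<Longrightarrow> s \<le> 1 \<Longrightarrow> 0 \<le> \<sigma> \<Longrightarrow> \<sigma> \<le> 1 \<Longrightarrow> p + s *\<^sub>R k + \<sigma> *\<^sub>R h \<in> S"
  shows "\<exists>s\<in>{0<..<1}. \<exists>\<sigma>\<in>{0<..<1}.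
    u (p + h + k) - u (p + h) - u (p + k) + u p = D2 (p + s *\<^sub>R k + \<sigma> *\<^sub>R h) h k"
proof -
  have "((\<lambda>q. u (q + h) - u q) has_derivative (\<lambda>v. Du (p + s *\<^sub>R k + h) v - Du (p + s *\<^sub>R k) v))
      (at (p + s *\<^sub>R k))" if "0 \<le> s" "s \<le> 1" for s
  proof -
    have "(u has_derivative blinfun_apply (Du (p + s *\<^sub>R k + h))) (at (p + s *\<^sub>R k + h))"
      using du S[OF that, of 1] by (simp add: add_ac)
    from has_derivative_diff[OF has_derivative_compose[OF has_derivative_add_const[OF has_derivative_ident] this]
        du[OF S[OF that, of 0, simplified]]]
    show ?thesis by (simp add: o_def)
  qed
  from mvt_segment[OF this] obtain s where s: "s \<in> {0<..<1}"
    "u (p + k + h) - u (p + k) - (u (p + h) - u p) = Du (p + s *\<^sub>R k + h) k - Du (p + s *\<^sub>R k) k"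
    by (auto simp: add_ac)
  have "((\<lambda>q. Du q k) has_derivative (\<lambda>v. D2 (p + s *\<^sub>R k + \<sigma> *\<^sub>R h) v k)) (at (p + s *\<^sub>R k + \<sigma> *\<^sub>R h))"
    if "0 \<le> \<sigma>" "\<sigma> \<le> 1" for \<sigma>
    using has_derivative_blinfun_apply_const[OF d2[OF S[of s \<sigma>]]] s that by simp
  from mvt_segment[OF this] obtain \<sigma> where \<sigma>: "\<sigma> \<in> {0<..<1}"
    "Du (p + s *\<^sub>R k + h) k - Du (p + s *\<^sub>R k) k = D2 (p + s *\<^sub>R k + \<sigma> *\<^sub>R h) h k"
    by auto
  have "u (p + h + k) - u (p + h) - u (p + k) + u p = D2 (p + s *\<^sub>R k + \<sigma> *\<^sub>R h) h k"
    using s(2) \<sigma>(2) by (simp add: algebra_simps)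
  with s(1) \<sigma>(1) show ?thesis by blast
qed

lemma norm_blinfun_apply2_le:
  "\<bar>(X :: 'a::real_normed_vector \<Rightarrow>\<^sub>L 'a \<Rightarrow>\<^sub>L real) h k\<bar> \<le> norm X * norm h * norm k"
proof -
  have "norm (X h k) \<le> norm (X h) * norm k" by (rule norm_blinfun)
  also have "\<dots> \<le> norm X * norm h * norm k" by (intro mult_right_mono norm_blinfun) auto
  finally show ?thesis by simp
qed

lemma second_difference_scaled:
  fixes u :: "'a::real_normed_vector \<Rightarrow> real"
  assumes du: "\<And>q. q \<in> S \<Longrightarrow> (u has_derivative blinfun_apply (Du q)) (at q)"
    and d2: "\<And>q. q \<in> S \<Longrightarrow> (Du has_derivative blinfun_apply (D2 q)) (at q)"
    and r: "ball p r \<subseteq> S" "0 < c" "c * (norm h + norm k) < r"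
  obtains z where "dist z p \<le> c * (norm h + norm k)"
    "u (p + c *\<^sub>R h + c *\<^sub>R k) - u (p + c *\<^sub>R h) - u (p + c *\<^sub>R k) + u p = c * c * D2 z h k"
proof -
  have near: "dist (p + s *\<^sub>R (c *\<^sub>R k) + \<sigma> *\<^sub>R (c *\<^sub>R h)) p \<le> c * (norm h + norm k)"
    if "0 \<le> s" "s \<le> 1" "0 \<le> \<sigma>" "\<sigma> \<le> 1" for s \<sigma>
  proof -
    have "norm (s *\<^sub>R (c *\<^sub>R k)) \<le> c * norm k" "norm (\<sigma> *\<^sub>R (c *\<^sub>R h)) \<le> c * norm h"
      using that r(2) by (simp_all add: mult_left_le_one_le)
    then have "norm (s *\<^sub>R (c *\<^sub>R k) + \<sigma> *\<^sub>R (c *\<^sub>R h)) \<le> c * norm k + c * norm h"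
      using norm_triangle_ineq[of "s *\<^sub>R (c *\<^sub>R k)" "\<sigma> *\<^sub>R (c *\<^sub>R h)"] by linarith
    then show ?thesis by (simp add: dist_norm add.assoc algebra_simps)
  qed
  then have "p + s *\<^sub>R (c *\<^sub>R k) + \<sigma> *\<^sub>R (c *\<^sub>R h) \<in> S"
    if "0 \<le> s" "s \<le> 1" "0 \<le> \<sigma>" "\<sigma> \<le> 1" for s \<sigma>
    using r that by (fastforce simp: dist_commute)
  from second_difference_eq_second_derivative[OF du d2 this] obtain s \<sigma>
    where "s \<in> {0<..<1}" "\<sigma> \<in> {0<..<1}"
      "u (p + c *\<^sub>R h + c *\<^sub>R k) - u (p + c *\<^sub>R h) - u (p + c *\<^sub>R k) + u p
        = D2 (p + s *\<^sub>R (c *\<^sub>R k) + \<sigma> *\<^sub>R (c *\<^sub>R h)) (c *\<^sub>R h) (c *\<^sub>R k)"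
    by blast
  then show ?thesis
    using near[of s \<sigma>] by (intro that) (auto simp: blinfun.scaleR_left blinfun.scaleR_right)
qed

lemma second_difference_quotient_tendsto:
  fixes u :: "'a::real_normed_vector \<Rightarrow> real"
  assumes S: "open S" "p \<in> S"
    and du: "\<And>q. q \<in> S \<Longrightarrow> (u has_derivative blinfun_apply (Du q)) (at q)"
    and d2: "\<And>q. q \<in> S \<Longrightarrow> (Du has_derivative blinfun_apply (D2 q)) (at q)"
    and cont: "isCont D2 p"
  shows "((\<lambda>c. (u (p + c *\<^sub>R h + c *\<^sub>R k) - u (p + c *\<^sub>R h) - u (p + c *\<^sub>R k) + u p) / (c * c))
    \<longlongrightarrow> D2 p h k) (at_right 0)"
proof (rule tendstoI)
  fix \<epsilon> :: real assume "\<epsilon> > 0"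
  define N where "N = norm h + norm k + 1"
  have "norm h < N" "norm k < N" "N > 0" using norm_ge_zero[of h] norm_ge_zero[of k] unfolding N_def by linarith+
  then have N: "N > 0" "norm h * norm k < N * N" by (auto intro!: mult_strict_mono)
  obtain r where r: "r > 0" "ball p r \<subseteq> S" using S open_contains_ball by blast
  have "\<epsilon> / (N * N) > 0" using \<open>\<epsilon> > 0\<close> N(1) by simp
  then obtain \<delta> where \<delta>: "\<delta> > 0" "\<And>z. dist z p < \<delta> \<Longrightarrow> dist (D2 z) (D2 p) < \<epsilon> / (N * N)"
    using cont unfolding continuous_at_eps_delta by blast
  have "dist ((u (p + c *\<^sub>R h + c *\<^sub>R k) - u (p + c *\<^sub>R h) - u (p + c *\<^sub>R k) + u p) / (c * c)) (D2 p h k) < \<epsilon>"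
    if c: "0 < c" "c < min r \<delta> / N" for c
  proof -
    have "c * (norm h + norm k) < c * N" using c(1) by (simp add: N_def)
    also have "\<dots> < min r \<delta>" using c N(1) by (simp add: less_divide_eq mult.commute)
    finally have small: "c * (norm h + norm k) < r" "c * (norm h + norm k) < \<delta>" by simp_all
    obtain z where z: "dist z p \<le> c * (norm h + norm k)"
      "u (p + c *\<^sub>R h + c *\<^sub>R k) - u (p + c *\<^sub>R h) - u (p + c *\<^sub>R k) + u p = c * c * D2 z h k"
      using second_difference_scaled[OF du d2 r(2) c(1) small(1)] by blast
    have "\<bar>D2 z h k - D2 p h k\<bar> \<le> norm (D2 z - D2 p) * norm h * norm k"
      using norm_blinfun_apply2_le[of "D2 z - D2 p" h k] by (simp add: blinfun.diff_left)
    also have "\<dots> \<le> \<epsilon> / (N * N) * (norm h * norm k)"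
      using \<delta>(2)[of z] z(1) small(2) unfolding mult.assoc by (intro mult_right_mono) (auto simp: dist_norm)
    also have "\<dots> < \<epsilon> / (N * N) * (N * N)"
      using N(2) \<open>\<epsilon> / (N * N) > 0\<close> by (rule mult_strict_left_mono)
    finally show ?thesis using z(2) c(1) N(1) by (simp add: dist_real_def)
  qed
  moreover have "min r \<delta> / N > 0" using r \<delta> N by simp
  ultimately show "\<forall>\<^sub>F c in at_right 0. dist ((u (p + c *\<^sub>R h + c *\<^sub>R k) - u (p + c *\<^sub>R h)
      - u (p + c *\<^sub>R k) + u p) / (c * c)) (D2 p h k) < \<epsilon>"
    unfolding eventually_at_right_field by blast
qed

text \<open>The second difference is symmetric in \<open>h\<close> and \<open>k\<close>, so both limits agree.\<close>
lemma second_derivative_symmetric: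
  fixes u :: "'a::real_normed_vector \<Rightarrow> real"
  assumes S: "open S" "p \<in> S"
    and du: "\<And>q. q \<in> S \<Longrightarrow> (u has_derivative blinfun_apply (Du q)) (at q)"
    and d2: "\<And>q. q \<in> S \<Longrightarrow> (Du has_derivative blinfun_apply (D2 q)) (at q)"
    and cont: "continuous_on S D2"
  shows "D2 p h k = D2 p k h"
proof -
  have "isCont D2 p" using cont S continuous_on_eq_continuous_at by blast
  from second_difference_quotient_tendsto[OF S du d2 this, of h k]
    second_difference_quotient_tendsto[OF S du d2 this, of k h]
  show ?thesis by (intro tendsto_unique[OF trivial_limit_at_right_real]) (simp_all add: algebra_simps)
qed

lemma has_integral_translate_supported:
  fixes G :: "'a::euclidean_space \<Rightarrow> real"
  assumes cont: "continuous_on UNIV G"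
    and supp: "\<And>x. x \<notin> cball 0 R \<Longrightarrow> G x = 0"
    and box: "cball 0 (R + norm c) \<subseteq> cbox a b"
  shows "((\<lambda>x. G (x + c)) has_integral integral (cbox a b) G) (cbox a b)"
proof -
  have on_box: "(G has_integral I) (cbox a' b') \<longleftrightarrow> (G has_integral I) UNIV"
    if "cball 0 R \<subseteq> cbox a' b'" for a' b' I
  proof -
    have "(\<lambda>x. if x \<in> cbox a' b' then G x else 0) = G"
      using supp that by (auto simp: fun_eq_iff subset_iff)
    then show ?thesis using has_integral_restrict_UNIV[of "cbox a' b'" G I] by simp
  qed
  have "cball 0 R \<subseteq> cball 0 (R + norm c)" by (simp add: subset_cball)
  then have "cball 0 R \<subseteq> cbox a b" using box by (rule order_trans)
  moreover have "G integrable_on cbox a b" by (rule integrable_continuous[OF continuous_on_subset[OF cont]]) simp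
  ultimately have "(G has_integral integral (cbox a b) G) UNIV" using on_box by blast
  moreover have "cball 0 R \<subseteq> cbox (a + c) (b + c)"
  proof
    fix x :: 'a assume "x \<in> cball 0 R"
    then have "x - c \<in> cbox a b" using box norm_triangle_ineq4[of x c] by auto
    then show "x \<in> cbox (a + c) (b + c)" by (auto simp: mem_box inner_diff_left inner_add_left)
  qed
  ultimately have "(G has_integral integral (cbox a b) G) (cbox (a + c) (b + c))" using on_box by blast
  then show ?thesis
    using has_integral_shift_cbox_iff[of G c "integral (cbox a b) G" a b] by (simp add: o_def add.commute)
qed

lemma abs_difference_quotient_le:
  fixes \<phi> :: "real \<Rightarrow> real"
  assumes "\<And>r. (\<phi> has_real_derivative \<phi>' r) (at r)" "\<And>r. \<bar>\<phi>' r\<bar> \<le> B" "0 < h"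
  shows "\<bar>(\<phi> h - \<phi> 0) / h\<bar> \<le> B"
proof -
  obtain z where "\<phi> h - \<phi> 0 = (h - 0) * \<phi>' z" using MVT2[of 0 h \<phi> \<phi>'] assms(1,3) by blast
  then show ?thesis using assms(2,3) by simp
qed

text \<open>The difference quotients along \<open>v\<close> integrate to zero by translation invariance;
  dominated convergence passes this to their limit \<open>D\<close>.\<close>
lemma integral_directional_derivative_eq_0:
  fixes G D :: "'a::euclidean_space \<Rightarrow> real"
  assumes cont: "continuous_on UNIV G"
    and supp: "\<And>x. x \<notin> cball 0 R \<Longrightarrow> G x = 0"
    and deriv: "\<And>x. ((\<lambda>r. G (x + r *\<^sub>R v)) has_real_derivative D x) (at 0)"
    and bound: "\<And>x. \<bar>D x\<bar> \<le> B"
    and box: "cball 0 (R + norm v) \<subseteq> cbox a b"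
  shows "D integrable_on cbox a b" "integral (cbox a b) D = 0"
proof -
  define h where "h n = 1 / real (Suc n)" for n
  have h: "0 < h n" "h n \<le> 1" for n by (auto simp: h_def)
  define f where "f n x = (G (x + h n *\<^sub>R v) - G x) / h n" for n x
  have f_int: "(f n has_integral 0) (cbox a b)" for n
  proof -
    have "h n * norm v \<le> norm v" using h[of n] by (simp add: mult_left_le_one_le)
    then have "cball 0 (R + norm (h n *\<^sub>R v)) \<subseteq> cbox a b"
      using box h[of n] by (auto simp: subset_iff)
    from has_integral_diff[OF has_integral_translate_supported[OF cont supp this]
        integrable_integral[OF integrable_continuous[OF continuous_on_subset[OF cont]]]]
    have "((\<lambda>x. G (x + h n *\<^sub>R v) - G x) has_integral 0) (cbox a b)" by simp
    from has_integral_mult_left[OF this, of "1 / h n"] show ?thesis by (simp add: f_def[abs_def])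
  qed
  have f_bound: "norm (f n x) \<le> B" for n x
  proof -
    have "((\<lambda>s. G (x + s *\<^sub>R v)) has_real_derivative D (x + r *\<^sub>R v)) (at r)" for r
      using DERIV_shift[of "\<lambda>s. G (x + s *\<^sub>R v)" "D (x + r *\<^sub>R v)" 0 r] deriv[of "x + r *\<^sub>R v"]
      by (simp add: algebra_simps scaleR_add_left)
    from abs_difference_quotient_le[OF this bound h(1)] show ?thesis by (simp add: f_def)
  qed
  have f_lim: "(\<lambda>n. f n x) \<longlonglongrightarrow> D x" for x
  proof -
    have "((\<lambda>y. (G (x + y *\<^sub>R v) - G x) / y) \<longlongrightarrow> D x) (at 0)"
      using deriv[of x] unfolding has_field_derivative_iff by simp
    moreover have "filterlim h (at 0) sequentially"
      using LIMSEQ_inverse_real_of_nat h unfolding h_def[abs_def] inverse_eq_divide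
      by (intro filterlim_atI) (auto intro!: always_eventually)
    ultimately show ?thesis unfolding f_def by (rule filterlim_compose)
  qed
  note dc = dominated_convergence[of f "cbox a b" "\<lambda>x. B" D,
      OF has_integral_integrable[OF f_int] integrable_const f_bound f_lim]
  show "D integrable_on cbox a b" by (rule dc(1))
  have "integral (cbox a b) (f n) = 0" for n using f_int by (rule integral_unique)
  then have "(\<lambda>n. 0) \<longlonglongrightarrow> integral (cbox a b) D" using dc(2) by simp
  then show "integral (cbox a b) D = 0" using LIMSEQ_const_iff by metis
qed

lemma cball_subset_symmetric_cbox:
  fixes c :: real
  shows "cball (0::'a::euclidean_space) c \<subseteq> cbox (- (c *\<^sub>R One)) (c *\<^sub>R One)"
proof
  fix x :: 'a assume "x \<in> cball 0 c"
  then have "\<bar>x \<bullet> i\<bar> \<le> c" if "i \<in> Basis" for i using Basis_le_norm[OF that, of x] by simp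
  then show "x \<in> cbox (- (c *\<^sub>R One)) (c *\<^sub>R One)" by (auto simp: mem_box abs_le_iff minus_le_iff)
qed

lemma integral_le_off_negligible:
  fixes f g :: "'a::euclidean_space \<Rightarrow> real"
  assumes "negligible N" "f integrable_on S" "g integrable_on S" "\<And>x. x \<in> S \<Longrightarrow> x \<notin> N \<Longrightarrow> f x \<le> g x"
  shows "integral S f \<le> integral S g"
proof -
  define h where "h x = (if x \<in> N then g x else f x)" for x
  have "integral S f = integral S h" by (rule integral_spike[OF assms(1)]) (simp add: h_def)
  also have "\<dots> \<le> integral S g"
    using integrable_spike[OF assms(2) assms(1), of h] assms(3,4)
    by (intro integral_le) (auto simp: h_def)
  finally show ?thesis .
qed

lemma exists_cbox_where_gt_half:
  fixes g :: "'a::euclidean_space \<Rightarrow> real"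
  assumes "continuous (at x) g" "0 < g x" "open S" "x \<in> S"
  obtains a b where "cbox a b \<subseteq> S" "0 < measure lborel (cbox a b)" "\<And>y. y \<in> cbox a b \<Longrightarrow> g x / 2 < g y"
proof -
  obtain r where r: "0 < r" "\<And>y. dist y x < r \<Longrightarrow> dist (g y) (g x) < g x / 2"
    using assms(1,2) unfolding continuous_at_eps_delta by (metis half_gt_zero)
  have "open (S \<inter> ball x r)" "x \<in> S \<inter> ball x r" using assms(3,4) r(1) by auto
  then obtain a b where ab: "cbox a b \<subseteq> S \<inter> ball x r" "\<forall>i\<in>Basis. a \<bullet> i < b \<bullet> i"
    by (rule open_contains_cbox)
  show ?thesis
  proof (rule that)
    show "cbox a b \<subseteq> S" "0 < measure lborel (cbox a b)" using ab content_pos_lt by auto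
    show "g x / 2 < g y" if "y \<in> cbox a b" for y
    proof -
      have "dist y x < r" using ab(1) that by (auto simp: dist_commute)
      then have "\<bar>g y - g x\<bar> < g x / 2" using r(2)[of y] by (simp add: dist_real_def)
      then show ?thesis by linarith
    qed
  qed
qed

lemma mult_measure_le_integral:
  fixes f :: "'a::euclidean_space \<Rightarrow> real"
  assumes "f integrable_on cbox c d" "cbox a b \<subseteq> cbox c d"
    and "\<And>x. x \<in> cbox c d \<Longrightarrow> 0 \<le> f x" "\<And>x. x \<in> cbox a b \<Longrightarrow> \<eta> \<le> f x"
  shows "\<eta> * measure lborel (cbox a b) \<le> integral (cbox c d) f"
proof -
  have f_ab: "f integrable_on cbox a b" using integrable_on_subcbox[OF assms(1,2)] .
  have "\<eta> * measure lborel (cbox a b) = integral (cbox a b) (\<lambda>x. \<eta>)" by simp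
  also have "\<dots> \<le> integral (cbox a b) f" using f_ab assms(4) by (intro integral_le) auto
  also have "\<dots> \<le> integral (cbox c d) f" using assms f_ab by (intro integral_subset_le) auto
  finally show ?thesis .
qed

definition cutoff :: "real \<Rightarrow> real \<Rightarrow> real" where "cutoff d r = (max (r - d) 0)\<^sup>2"

definition cutoff' :: "real \<Rightarrow> real \<Rightarrow> real" where "cutoff' d r = 2 * max (r - d) 0"

lemma cutoff_eq_0: "r \<le> d \<Longrightarrow> cutoff d r = 0"
  and cutoff'_eq_0: "r \<le> d \<Longrightarrow> cutoff' d r = 0"
  and cutoff_nonneg: "0 \<le> cutoff d r"
  and cutoff'_nonneg: "0 \<le> cutoff' d r"
  by (simp_all add: cutoff_def cutoff'_def)

lemma continuous_on_cutoff: "continuous_on S (cutoff d)"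
  and continuous_on_cutoff': "continuous_on S (cutoff' d)"
  unfolding cutoff_def[abs_def] cutoff'_def[abs_def] by (intro continuous_intros)+

lemma has_real_derivative_cutoff_at_threshold: "(cutoff d has_real_derivative 0) (at d)"
proof -
  have "norm ((cutoff d y - cutoff d d) / (y - d)) \<le> \<bar>y - d\<bar>" for y
  proof (cases "d < y")
    case True
    then have "(cutoff d y - cutoff d d) / (y - d) = y - d" by (simp add: cutoff_def power2_eq_square)
    then show ?thesis by simp
  next
    case False
    then show ?thesis by (simp add: cutoff_def)
  qed
  then have "\<forall>\<^sub>F y in at d. norm ((cutoff d y - cutoff d d) / (y - d)) \<le> \<bar>y - d\<bar>"
    by (intro always_eventually allI)
  moreover have "((\<lambda>y. \<bar>y - d\<bar>) \<longlongrightarrow> 0) (at d)"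
    using tendsto_rabs[OF LIM_zero[OF tendsto_ident_at]] by simp
  ultimately have "((\<lambda>y. (cutoff d y - cutoff d d) / (y - d)) \<longlongrightarrow> 0) (at d)"
    by (rule Lim_null_comparison)
  then show ?thesis by (simp add: has_field_derivative_iff)
qed

lemma has_real_derivative_cutoff: "(cutoff d has_real_derivative cutoff' d r) (at r)"
proof -
  consider "r = d" | "r < d" | "d < r" by linarith
  then show ?thesis
  proof cases
    case 1
    then show ?thesis using has_real_derivative_cutoff_at_threshold by (simp add: cutoff'_def)
  next
    case 2
    have "((\<lambda>y. 0) has_real_derivative cutoff' d r) (at r)" using 2 by (simp add: cutoff'_def)
    then show ?thesis
      by (rule has_field_derivative_transform_within_open[where S="{..<d}"]) (use 2 in \<open>auto simp: cutoff_def\<close>)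
  next
    case 3
    have "((\<lambda>y. (y - d)\<^sup>2) has_real_derivative cutoff' d r) (at r)"
      using 3 by (auto simp: cutoff'_def intro!: derivative_eq_intros)
    then show ?thesis
      by (rule has_field_derivative_transform_within_open[where S="{d<..}"]) (use 3 in \<open>auto simp: cutoff_def\<close>)
  qed
qed

lemma continuous_on_mult_vanishing_outside:
  fixes \<phi> H :: "'b::t2_space \<Rightarrow> real"
  assumes "continuous_on U \<phi>" "closed K" "\<And>y. y \<in> U \<Longrightarrow> y \<notin> K \<Longrightarrow> \<phi> y = 0"
    and "open A" "K \<subseteq> A" "continuous_on (A \<inter> U) H"
  shows "continuous_on U (\<lambda>y. \<phi> y * H y)"
proof (rule continuous_on_eq_continuous_within[THEN iffD2], rule ballI)
  fix y assume y: "y \<in> U"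
  show "continuous (at y within U) (\<lambda>y. \<phi> y * H y)"
  proof (cases "y \<in> A")
    case True
    have "continuous_on (U \<inter> A) (\<lambda>y. \<phi> y * H y)"
      using continuous_on_subset[OF assms(1), of "U \<inter> A"] continuous_on_subset[OF assms(6), of "U \<inter> A"]
      by (intro continuous_on_mult) (auto simp: Int_commute)
    then have "continuous (at y within U \<inter> A) (\<lambda>y. \<phi> y * H y)"
      using True y by (simp add: continuous_on_eq_continuous_within)
    moreover have "at y within U \<inter> A = at y within U"
      by (rule at_within_nhd[of _ A]) (use True assms(4) in auto)
    ultimately show ?thesis by simp
  next
    case False
    have "continuous_on (U \<inter> - K) (\<lambda>y. \<phi> y * H y)"
      by (rule continuous_on_eq[OF continuous_on_const[of _ 0]]) (use assms(3) in auto)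
    then have "continuous (at y within U \<inter> - K) (\<lambda>y. \<phi> y * H y)"
      using False assms(5) y by (auto simp: continuous_on_eq_continuous_within)
    moreover have "at y within U \<inter> - K = at y within U"
      by (rule at_within_nhd[of _ "- K"]) (use False assms(2,5) in auto)
    ultimately show ?thesis by simp
  qed
qed

lemma two_mul_inner_le_of_norm_le:
  fixes y g :: "'a::real_inner"
  assumes "norm y \<le> c"
  shows "2 * a * (y \<bullet> g) \<le> c * (a\<^sup>2 + g \<bullet> g)"
proof -
  have "a * (y \<bullet> g) \<le> \<bar>a\<bar> * \<bar>y \<bullet> g\<bar>" by (simp add: abs_mult[symmetric])
  also have "\<dots> \<le> \<bar>a\<bar> * (norm y * norm g)" by (intro mult_left_mono Cauchy_Schwarz_ineq2) auto
  finally have "2 * a * (y \<bullet> g) \<le> 2 * \<bar>a\<bar> * (norm y * norm g)" by simp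
  also have "\<dots> \<le> c * (2 * \<bar>a\<bar> * norm g)"
    using mult_right_mono[OF assms, of "2 * \<bar>a\<bar> * norm g"] by (simp add: mult_ac)
  also have "\<dots> \<le> c * (a\<^sup>2 + g \<bullet> g)"
    using sum_squares_bound[of "\<bar>a\<bar>" "norm g"] order_trans[OF norm_ge_zero assms]
    by (intro mult_left_mono) (auto simp: power2_norm_eq_inner[symmetric] power2_eq_square algebra_simps)
  finally show ?thesis .
qed

lemma tendsto_add_scaleR_inverse_Suc:
  fixes z v :: "'a::real_normed_vector" and t :: "'b::topological_space"
  shows "(\<lambda>n. (z + (1 / real (Suc n)) *\<^sub>R v, t)) \<longlonglongrightarrow> (z, t)"
proof -
  have "(\<lambda>n. z + (1 / real (Suc n)) *\<^sub>R v) \<longlonglongrightarrow> z + 0 *\<^sub>R v"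
    using LIMSEQ_inverse_real_of_nat by (intro tendsto_intros) (simp add: inverse_eq_divide)
  then show ?thesis by (auto intro: tendsto_Pair)
qed

lemma eventually_add_scaleR_inverse_Suc_in_open:
  fixes z v :: "'a::real_normed_vector" and t :: "'b::topological_space"
  assumes "open S" "(z, t) \<in> S"
  shows "\<forall>\<^sub>F n in sequentially. (z + (1 / real (Suc n)) *\<^sub>R v, t) \<in> S"
  using topological_tendstoD[OF tendsto_add_scaleR_inverse_Suc assms] .

lemma eventually_inner_add_scaleR_inverse_Suc_nonzero:
  fixes z v :: "'a::real_inner"
  assumes "finite B" "\<And>\<beta>. \<beta> \<in> B \<Longrightarrow> \<beta> \<bullet> z \<noteq> 0 \<or> \<beta> \<bullet> v \<noteq> 0"
  shows "\<forall>\<^sub>F n in sequentially. \<forall>\<beta>\<in>B. \<beta> \<bullet> (z + (1 / real (Suc n)) *\<^sub>R v) \<noteq> 0"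
proof (rule eventually_ball_finite[OF assms(1)], rule ballI)
  fix \<beta> assume "\<beta> \<in> B"
  show "\<forall>\<^sub>F n in sequentially. \<beta> \<bullet> (z + (1 / real (Suc n)) *\<^sub>R v) \<noteq> 0"
  proof (cases "\<beta> \<bullet> z = 0")
    case True
    then show ?thesis using assms(2)[OF \<open>\<beta> \<in> B\<close>] by (simp add: inner_add_right)
  next
    case False
    have "(\<lambda>n. \<beta> \<bullet> (z + (1 / real (Suc n)) *\<^sub>R v)) \<longlonglongrightarrow> \<beta> \<bullet> z"
      using tendsto_fst[OF tendsto_add_scaleR_inverse_Suc[of z v 0]] by (intro tendsto_intros) simp
    then show ?thesis using False by (rule tendsto_imp_eventually_ne)
  qed
qed

lemma isCont_eventually_zero_imp_zero:
  fixes z v :: "'a::real_normed_vector" and t :: "'b::t2_space"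
  assumes "isCont f (z, t)" "\<forall>\<^sub>F n in sequentially. f (z + (1 / real (Suc n)) *\<^sub>R v, t) = 0"
  shows "f (z, t) = (0::real)"
proof -
  have "(\<lambda>n. f (z + (1 / real (Suc n)) *\<^sub>R v, t)) \<longlonglongrightarrow> f (z, t)"
    using isCont_tendsto_compose[OF assms(1) tendsto_add_scaleR_inverse_Suc] .
  moreover have "(\<lambda>n. f (z + (1 / real (Suc n)) *\<^sub>R v, t)) \<longlonglongrightarrow> 0"
    using tendsto_eventually[OF eventually_mono[OF assms(2)]] by simp
  ultimately show ?thesis using LIMSEQ_unique by blast
qed

section \<open>Root systems\<close>

lemma exists_vector_avoiding_hyperplanes:
  fixes V :: "'a::euclidean_space set"
  assumes "finite B" "subspace V" "\<And>\<beta>. \<beta> \<in> B \<Longrightarrow> \<exists>v\<in>V. \<beta> \<bullet> v \<noteq> 0"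
  shows "\<exists>v\<in>V. \<forall>\<beta>\<in>B. \<beta> \<bullet> v \<noteq> 0"
  using assms
proof (induction B rule: finite_induct)
  case empty
  then show ?case using subspace_0 by blast
next
  case (insert b B)
  then obtain v where v: "v \<in> V" "\<forall>\<beta>\<in>B. \<beta> \<bullet> v \<noteq> 0" by blast
  obtain v' where v': "v' \<in> V" "b \<bullet> v' \<noteq> 0" using insert.prems by blast
  show ?case
  proof (cases "b \<bullet> v = 0")
    case False
    then show ?thesis using v by auto
  next
    case True
    have "finite (insert 0 ((\<lambda>\<beta>. - (\<beta> \<bullet> v) / (\<beta> \<bullet> v')) ` B))" using insert.hyps by simp
    then obtain c :: real where c: "c \<notin> insert 0 ((\<lambda>\<beta>. - (\<beta> \<bullet> v) / (\<beta> \<bullet> v')) ` B)"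
      using ex_new_if_finite[OF infinite_UNIV_char_0] by blast
    have "\<beta> \<bullet> (v + c *\<^sub>R v') \<noteq> 0" if "\<beta> \<in> insert b B" for \<beta>
    proof (cases "\<beta> = b \<or> \<beta> \<bullet> v' = 0")
      case True
      then show ?thesis using \<open>b \<bullet> v = 0\<close> c v v' that by (auto simp: inner_add_right)
    next
      case False
      then have "\<beta> \<in> B" "c \<noteq> - (\<beta> \<bullet> v) / (\<beta> \<bullet> v')" using c that by auto
      then show ?thesis using False by (simp add: inner_add_right field_simps)
    qed
    moreover have "v + c *\<^sub>R v' \<in> V" using v v' insert.prems(1) by (simp add: subspace_add subspace_scale)
    ultimately show ?thesis by blast
  qed
qed

lemma root_system_finite: "normalized_reduced_root_system R \<Longrightarrow> finite R"
  and root_system_inner_self: "normalized_reduced_root_system R \<Longrightarrow> \<alpha> \<in> R \<Longrightarrow> \<alpha> \<bullet> \<alpha> = 2"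
  and root_system_nonzero: "normalized_reduced_root_system R \<Longrightarrow> \<alpha> \<in> R \<Longrightarrow> \<alpha> \<noteq> 0"
  by (auto simp: normalized_reduced_root_system_def)

lemma root_system_uminus:
  assumes "normalized_reduced_root_system R" "\<alpha> \<in> R"
  shows "- \<alpha> \<in> R"
proof -
  have "refl_root \<alpha> \<alpha> \<in> R" using assms by (simp add: normalized_reduced_root_system_def)
  moreover have "refl_root \<alpha> \<alpha> = - \<alpha>"
    using root_system_inner_self[OF assms] by (simp add: refl_root_def scaleR_2)
  ultimately show ?thesis by simp
qed

lemma positive_subsystem_subset: "positive_subsystem R Rp \<Longrightarrow> Rp \<subseteq> R"
  and positive_subsystem_uminus_notin: "positive_subsystem R Rp \<Longrightarrow> \<alpha> \<in> Rp \<Longrightarrow> - \<alpha> \<notin> Rp"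
  by (auto simp: positive_subsystem_def)

lemma positive_subsystem_cases:
  assumes "normalized_reduced_root_system R" "positive_subsystem R Rp" "\<alpha> \<in> R"
  shows "\<alpha> \<in> Rp \<or> - \<alpha> \<in> Rp"
  using assms root_system_uminus[OF assms(1,3)] by (force simp: positive_subsystem_def)

lemma positive_subsystem_inner_nonzero_iff:
  assumes "normalized_reduced_root_system R" "positive_subsystem R Rp"
  shows "(\<forall>\<alpha>\<in>R. \<alpha> \<bullet> x \<noteq> 0) \<longleftrightarrow> (\<forall>\<alpha>\<in>Rp. \<alpha> \<bullet> x \<noteq> 0)"
  using positive_subsystem_subset[OF assms(2)] positive_subsystem_cases[OF assms]
  by (metis inner_minus_left neg_equal_0_iff_equal subsetD)

lemma positive_roots_abs_inner_less:
  assumes R: "normalized_reduced_root_system R" "positive_subsystem R Rp"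
    and roots: "\<alpha> \<in> Rp" "\<beta> \<in> Rp" "\<beta> \<noteq> \<alpha>"
  shows "\<bar>\<alpha> \<bullet> \<beta>\<bar> < 2"
proof -
  have norms: "norm \<alpha> = sqrt 2" "norm \<beta> = sqrt 2"
    using roots positive_subsystem_subset[OF R(2)] root_system_inner_self[OF R(1)]
    by (auto simp: norm_eq_sqrt_inner)
  have "\<bar>\<alpha> \<bullet> \<beta>\<bar> \<noteq> norm \<alpha> * norm \<beta>"
  proof
    assume "\<bar>\<alpha> \<bullet> \<beta>\<bar> = norm \<alpha> * norm \<beta>"
    then have "norm \<alpha> *\<^sub>R \<beta> = norm \<beta> *\<^sub>R \<alpha> \<or> norm \<alpha> *\<^sub>R \<beta> = - norm \<beta> *\<^sub>R \<alpha>"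
      using norm_cauchy_schwarz_abs_eq by blast
    then have "sqrt 2 *\<^sub>R \<beta> = sqrt 2 *\<^sub>R \<alpha> \<or> sqrt 2 *\<^sub>R \<beta> = sqrt 2 *\<^sub>R (- \<alpha>)"
      using norms by simp
    then have "\<beta> = \<alpha> \<or> \<beta> = - \<alpha>" by (metis scaleR_cancel_left real_sqrt_eq_zero_cancel_iff zero_neq_numeral)
    then show False using roots positive_subsystem_uminus_notin[OF R(2)] by auto
  qed
  then show ?thesis using Cauchy_Schwarz_ineq2[of \<alpha> \<beta>] norms by simp
qed

lemma positive_root_hyperplane_generic_vector:
  assumes R: "normalized_reduced_root_system R" "positive_subsystem R Rp" and "\<alpha> \<in> Rp"
  shows "\<exists>v. \<alpha> \<bullet> v = 0 \<and> (\<forall>\<beta>\<in>Rp - {\<alpha>}. \<beta> \<bullet> v \<noteq> 0)"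
proof -
  have "\<exists>v\<in>{v. \<alpha> \<bullet> v = 0}. \<forall>\<beta>\<in>Rp - {\<alpha>}. \<beta> \<bullet> v \<noteq> 0"
  proof (rule exists_vector_avoiding_hyperplanes)
    show "finite (Rp - {\<alpha>})"
      using finite_subset[OF positive_subsystem_subset root_system_finite] R by blast
    show "subspace {v. \<alpha> \<bullet> v = 0}" by (rule subspace_hyperplane)
    fix \<beta> assume \<beta>: "\<beta> \<in> Rp - {\<alpha>}"
    have norms: "\<alpha> \<bullet> \<alpha> = 2" "\<beta> \<bullet> \<beta> = 2"
      using \<open>\<alpha> \<in> Rp\<close> \<beta> positive_subsystem_subset[OF R(2)] root_system_inner_self[OF R(1)] by auto
    have "\<bar>\<alpha> \<bullet> \<beta>\<bar> * \<bar>\<alpha> \<bullet> \<beta>\<bar> < 2 * 2"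
      using positive_roots_abs_inner_less[OF R \<open>\<alpha> \<in> Rp\<close>, of \<beta>] \<beta> by (intro mult_strict_mono) auto
    then have "\<beta> \<bullet> (\<beta> - ((\<alpha> \<bullet> \<beta>) / 2) *\<^sub>R \<alpha>) \<noteq> 0"
      using norms by (simp add: inner_diff_right inner_commute abs_mult[symmetric])
    moreover have "\<alpha> \<bullet> (\<beta> - ((\<alpha> \<bullet> \<beta>) / 2) *\<^sub>R \<alpha>) = 0"
      using norms by (simp add: inner_diff_right)
    ultimately show "\<exists>v\<in>{v. \<alpha> \<bullet> v = 0}. \<beta> \<bullet> v \<noteq> 0" by blast
  qed
  then show ?thesis by blast
qed

lemma negligible_root_hyperplanes:
  assumes "normalized_reduced_root_system R" "positive_subsystem R Rp"
  shows "negligible {x. \<exists>\<alpha>\<in>Rp. \<alpha> \<bullet> x = 0}"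
proof -
  have "{x. \<exists>\<alpha>\<in>Rp. \<alpha> \<bullet> x = 0} = (\<Union>\<alpha>\<in>Rp. {x. \<alpha> \<bullet> x = 0})" by auto
  moreover have "finite Rp"
    using finite_subset[OF positive_subsystem_subset root_system_finite] assms by blast
  moreover have "negligible {x. \<alpha> \<bullet> x = 0}" if "\<alpha> \<in> Rp" for \<alpha>
    using that positive_subsystem_subset[OF assms(2)] root_system_nonzero[OF assms(1)]
    by (intro negligible_hyperplane) auto
  ultimately show ?thesis by (auto intro!: negligible_Union)
qed

section \<open>Solutions in the light cone\<close>

locale dunkl_wave_cone =
  fixes R Rp :: "'a::euclidean_space set"
    and k :: "'a \<Rightarrow> real"
    and x0 :: 'a and t0 :: real
    and u :: "'a \<times> real \<Rightarrow> real"
    and Du :: "'a \<times> real \<Rightarrow> ('a \<times> real) \<Rightarrow>\<^sub>L real"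
    and D2u :: "'a \<times> real \<Rightarrow> ('a \<times> real) \<Rightarrow>\<^sub>L (('a \<times> real) \<Rightarrow>\<^sub>L real)"
  assumes root_system: "normalized_reduced_root_system R"
    and positive: "positive_subsystem R Rp"
    and multiplicity: "multiplicity_function R k"
    and t0_pos: "t0 > 0"
    and u_deriv: "\<forall>p\<in>light_cone x0 t0. (u has_derivative blinfun_apply (Du p)) (at p within light_cone x0 t0)"
    and Du_deriv: "\<forall>p\<in>light_cone x0 t0. (Du has_derivative blinfun_apply (D2u p)) (at p within light_cone x0 t0)"
    and D2u_cont: "continuous_on (light_cone x0 t0) D2u"
    and wave_eq: "\<forall>p\<in>light_cone x0 t0. (\<forall>\<alpha>\<in>R. \<alpha> \<bullet> fst p \<noteq> 0) \<longrightarrow> dunkl_wave_op Rp k Du D2u p = 0"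
    and initial: "\<forall>x. norm (x - x0) \<le> t0 \<longrightarrow> u (x, 0) = 0 \<and> Du (x, 0) (0, 1) = 0"
begin

abbreviation cone :: "('a \<times> real) set" where "cone \<equiv> light_cone x0 t0"

definition cone_interior :: "('a \<times> real) set" where
  "cone_interior = {p. 0 < snd p \<and> norm (fst p - x0) < t0 - snd p}"

lemma mem_cone_interior: "(x, t) \<in> cone_interior \<longleftrightarrow> 0 < t \<and> norm (x - x0) < t0 - t"
  by (simp add: cone_interior_def)

lemma open_cone_interior: "open cone_interior"
proof -
  have "cone_interior = {p. 0 < snd p} \<inter> {p. norm (fst p - x0) + snd p < t0}"
    by (auto simp: cone_interior_def)
  then show ?thesis by (auto intro!: open_Int open_Collect_less continuous_intros)
qed

lemma cone_interior_subset: "cone_interior \<subseteq> cone"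
  by (auto simp: cone_interior_def light_cone_def)

lemma at_within_cone: "p \<in> cone_interior \<Longrightarrow> at p within cone = at p"
  using at_within_open_subset[OF _ open_cone_interior cone_interior_subset] .

lemma u_has_derivative_at: "p \<in> cone_interior \<Longrightarrow> (u has_derivative blinfun_apply (Du p)) (at p)"
  using u_deriv cone_interior_subset at_within_cone by fastforce

lemma Du_has_derivative_at: "p \<in> cone_interior \<Longrightarrow> (Du has_derivative blinfun_apply (D2u p)) (at p)"
  using Du_deriv cone_interior_subset at_within_cone by fastforce

lemma continuous_on_u: "continuous_on cone u"
  and continuous_on_Du: "continuous_on cone Du"
  using u_deriv Du_deriv has_derivative_continuous continuous_on_eq_continuous_within by blast+

lemma isCont_Du: "p \<in> cone_interior \<Longrightarrow> isCont Du p"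
  and isCont_D2u: "p \<in> cone_interior \<Longrightarrow> isCont D2u p"
  using continuous_on_Du D2u_cont cone_interior_subset open_cone_interior
  by (meson continuous_on_eq_continuous_at continuous_on_subset)+

lemma D2u_symmetric: "p \<in> cone_interior \<Longrightarrow> D2u p h h' = D2u p h' h"
  by (rule second_derivative_symmetric[OF open_cone_interior _ u_has_derivative_at
        Du_has_derivative_at continuous_on_subset[OF D2u_cont cone_interior_subset]])

lemma Rp_subset: "Rp \<subseteq> R"
  using positive_subsystem_subset[OF positive] .

lemma finite_Rp: "finite Rp"
  using finite_subset[OF Rp_subset root_system_finite[OF root_system]] .

lemma inner_self_root: "\<alpha> \<in> Rp \<Longrightarrow> \<alpha> \<bullet> \<alpha> = 2"
  using Rp_subset root_system_inner_self[OF root_system] by blast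

lemma norm_root: "\<alpha> \<in> Rp \<Longrightarrow> norm \<alpha> = sqrt 2"
  using inner_self_root by (simp add: norm_eq_sqrt_inner)

lemma k_nonneg: "\<alpha> \<in> Rp \<Longrightarrow> 0 \<le> k \<alpha>"
  using multiplicity Rp_subset by (auto simp: multiplicity_function_def)

definition regular :: "'a \<Rightarrow> bool" where "regular x \<longleftrightarrow> (\<forall>\<alpha>\<in>Rp. \<alpha> \<bullet> x \<noteq> 0)"

lemma negligible_irregular: "negligible {x. \<not> regular x}"
  using negligible_root_hyperplanes[OF root_system positive] by (simp add: regular_def)

lemma open_regular: "open {x. regular x}"
proof -
  have "{x. regular x} = (\<Inter>\<alpha>\<in>Rp. {x. \<alpha> \<bullet> x \<noteq> 0})" by (auto simp: regular_def)
  then show ?thesis using finite_Rp by (auto intro!: open_INT open_Collect_neq continuous_intros)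
qed

lemma wave_equation:
  assumes "(x, t) \<in> cone" "regular x"
  shows "(\<Sum>b\<in>Basis. D2u (x, t) (b, 0) (b, 0)) + 2 * (\<Sum>\<alpha>\<in>Rp. k \<alpha> * Du (x, t) (\<alpha>, 0) / (\<alpha> \<bullet> x))
     - D2u (x, t) (0, 1) (0, 1) = 0"
  using wave_eq assms positive_subsystem_inner_nonzero_iff[OF root_system positive]
  unfolding regular_def dunkl_wave_op_def by fastforce

text \<open>Off the hyperplanes the equation reads \<open>k \<alpha> \<partial>\<^sub>\<alpha>u = (\<alpha> \<bullet> x) H\<close>, where \<open>H\<close>
  collects the remaining terms and is continuous at \<open>(z, t)\<close> because \<open>z\<close> lies on no
  other root hyperplane.\<close>
lemma Du_root_eq_0_at_generic_point:
  assumes zt: "(z, t) \<in> cone_interior" and \<alpha>: "\<alpha> \<in> Rp" "\<alpha> \<bullet> z = 0" "k \<alpha> \<noteq> 0"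
    and generic: "\<forall>\<beta>\<in>Rp - {\<alpha>}. \<beta> \<bullet> z \<noteq> 0"
  shows "Du (z, t) (\<alpha>, 0) = 0"
proof -
  define H where "H p = (D2u p (0, 1) (0, 1) - (\<Sum>b\<in>Basis. D2u p (b, 0) (b, 0))) / 2
     - (\<Sum>\<beta>\<in>Rp - {\<alpha>}. k \<beta> * Du p (\<beta>, 0) / (\<beta> \<bullet> fst p))" for p
  define \<Phi> where "\<Phi> p = k \<alpha> * Du p (\<alpha>, 0) - (\<alpha> \<bullet> fst p) * H p" for p
  have "isCont \<Phi> (z, t)"
    unfolding \<Phi>_def H_def
    by (intro continuous_intros blinfun.continuous isCont_Du[OF zt] isCont_D2u[OF zt]) (use generic in auto)
  moreover have "\<forall>\<^sub>F n in sequentially. \<forall>\<beta>\<in>Rp. \<beta> \<bullet> (z + (1 / real (Suc n)) *\<^sub>R \<alpha>) \<noteq> 0"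
    using generic inner_self_root
    by (intro eventually_inner_add_scaleR_inverse_Suc_nonzero[OF finite_Rp]) (metis DiffI singletonD zero_neq_numeral)
  with eventually_add_scaleR_inverse_Suc_in_open[OF open_cone_interior zt, of \<alpha>]
  have "\<forall>\<^sub>F n in sequentially. \<Phi> (z + (1 / real (Suc n)) *\<^sub>R \<alpha>, t) = 0"
  proof eventually_elim
    case (elim n)
    define x where "x = z + (1 / real (Suc n)) *\<^sub>R \<alpha>"
    have "(x, t) \<in> cone" "regular x"
      using elim cone_interior_subset by (auto simp: x_def regular_def)
    note eq = wave_equation[OF this, unfolded sum.remove[OF finite_Rp \<alpha>(1)]]
    have "\<alpha> \<bullet> x \<noteq> 0" using \<open>regular x\<close> \<alpha>(1) by (simp add: regular_def)
    with eq have "k \<alpha> * Du (x, t) (\<alpha>, 0) = (\<alpha> \<bullet> x) * H (x, t)"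
      by (simp add: H_def field_simps)
    then show ?case by (simp add: \<Phi>_def x_def)
  qed
  ultimately have "\<Phi> (z, t) = 0" by (rule isCont_eventually_zero_imp_zero)
  then show ?thesis using \<alpha> by (simp add: \<Phi>_def)
qed

lemma Du_root_eq_0_on_hyperplane:
  assumes zt: "(z, t) \<in> cone_interior" and \<alpha>: "\<alpha> \<in> Rp" "\<alpha> \<bullet> z = 0" "k \<alpha> \<noteq> 0"
  shows "Du (z, t) (\<alpha>, 0) = 0"
proof -
  obtain v where v: "\<alpha> \<bullet> v = 0" "\<forall>\<beta>\<in>Rp - {\<alpha>}. \<beta> \<bullet> v \<noteq> 0"
    using positive_root_hyperplane_generic_vector[OF root_system positive \<alpha>(1)] by blast
  have "isCont (\<lambda>p. Du p (\<alpha>, 0)) (z, t)"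
    by (intro continuous_intros blinfun.continuous isCont_Du[OF zt])
  moreover have "\<forall>\<^sub>F n in sequentially. \<forall>\<beta>\<in>Rp - {\<alpha>}. \<beta> \<bullet> (z + (1 / real (Suc n)) *\<^sub>R v) \<noteq> 0"
    using finite_Rp v(2) by (intro eventually_inner_add_scaleR_inverse_Suc_nonzero) auto
  with eventually_add_scaleR_inverse_Suc_in_open[OF open_cone_interior zt, of v]
  have "\<forall>\<^sub>F n in sequentially. Du (z + (1 / real (Suc n)) *\<^sub>R v, t) (\<alpha>, 0) = 0"
  proof eventually_elim
    case (elim n)
    show ?case
      by (rule Du_root_eq_0_at_generic_point[OF elim(1) \<alpha>(1) _ \<alpha>(3) elim(2)])
         (use \<alpha>(2) v(1) in \<open>simp add: inner_add_right\<close>)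
  qed
  ultimately show ?thesis by (rule isCont_eventually_zero_imp_zero)
qed

section \<open>Cones and the singular terms\<close>

definition cone_gap :: "'a \<Rightarrow> real \<Rightarrow> real" where
  "cone_gap x t = (t0 - t)\<^sup>2 - (norm (x - x0))\<^sup>2"

definition cone_core :: "real \<Rightarrow> real \<Rightarrow> ('a \<times> real) set" where
  "cone_core \<delta> T = {p. 0 \<le> snd p \<and> snd p \<le> T \<and> \<delta> \<le> cone_gap (fst p) (snd p)}"

lemma norm_less_of_cone_gap_pos:
  assumes "0 < cone_gap x t" "t < t0"
  shows "norm (x - x0) < t0 - t"
proof -
  have "(norm (x - x0))\<^sup>2 < (t0 - t)\<^sup>2" using assms(1) by (simp add: cone_gap_def)
  then show ?thesis by (rule power_less_imp_less_base) (use assms(2) in simp)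
qed

lemma cone_core_subset_interior:
  assumes "0 < \<delta>" "T < t0" "(x, t) \<in> cone_core \<delta> T" "0 < t"
  shows "(x, t) \<in> cone_interior"
proof -
  have "0 < cone_gap x t" "t < t0" using assms by (auto simp: cone_core_def)
  then show ?thesis using assms(4) norm_less_of_cone_gap_pos by (simp add: mem_cone_interior)
qed

lemma cone_core_subset:
  assumes "0 < \<delta>" "T < t0"
  shows "cone_core \<delta> T \<subseteq> cone"
proof
  fix p assume p: "p \<in> cone_core \<delta> T"
  then have "0 < cone_gap (fst p) (snd p)" "snd p < t0" "0 \<le> snd p" using assms by (auto simp: cone_core_def)
  then show "p \<in> cone" using norm_less_of_cone_gap_pos[of "fst p" "snd p"] by (simp add: light_cone_def case_prod_beta)
qed

lemma compact_cone_core: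
  assumes "0 < \<delta>" "T < t0"
  shows "compact (cone_core \<delta> T)"
  unfolding compact_eq_bounded_closed
proof
  have "cone_core \<delta> T \<subseteq> cball x0 t0 \<times> {0..T}"
    using cone_core_subset[OF assms] by (auto simp: cone_core_def light_cone_def dist_norm norm_minus_commute)
  moreover have "bounded (cball x0 t0 \<times> {0..T})" by (intro bounded_Times) auto
  ultimately show "bounded (cone_core \<delta> T)" using bounded_subset by blast
  have "cone_core \<delta> T = {p. 0 \<le> snd p} \<inter> {p. snd p \<le> T} \<inter> {p. \<delta> \<le> (t0 - snd p)\<^sup>2 - (norm (fst p - x0))\<^sup>2}"
    by (auto simp: cone_core_def cone_gap_def)
  moreover have "closed {p::'a \<times> real. 0 \<le> snd p}" "closed {p::'a \<times> real. snd p \<le> T}"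
    "closed {p::'a \<times> real. \<delta> \<le> (t0 - snd p)\<^sup>2 - (norm (fst p - x0))\<^sup>2}"
    by (intro closed_Collect_le continuous_intros)+
  ultimately show "closed (cone_core \<delta> T)" by auto
qed

lemma cone_gap_half_le_near:
  assumes "0 \<le> t" "t < t0" "0 < \<delta>" "\<delta> \<le> cone_gap x t"
    and near: "norm (y - x) \<le> min 1 (\<delta> / (2 * (2 * t0 + 1)))"
  shows "\<delta> / 2 \<le> cone_gap y t"
proof -
  define \<eta> where "\<eta> = min 1 (\<delta> / (2 * (2 * t0 + 1)))"
  have "\<eta> \<le> \<delta> / (2 * (2 * t0 + 1))" by (simp add: \<eta>_def)
  then have "\<eta> * (2 * t0 + 1) \<le> \<delta> / (2 * (2 * t0 + 1)) * (2 * t0 + 1)"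
    using t0_pos by (intro mult_right_mono) auto
  also have "\<dots> = \<delta> / 2" using t0_pos by (simp add: field_simps)
  finally have \<eta>: "0 \<le> \<eta>" "\<eta> \<le> 1" "\<eta> * (2 * t0 + 1) \<le> \<delta> / 2"
    using assms t0_pos by (simp_all add: \<eta>_def)
  have x: "norm (x - x0) \<le> t0" using norm_less_of_cone_gap_pos[of x t] assms by auto
  have "norm (y - x) \<le> \<eta>" unfolding \<eta>_def by (rule near)
  then have "norm (y - x0) \<le> norm (x - x0) + \<eta>"
    using norm_triangle_ineq[of "y - x" "x - x0"] by simp
  then have "(norm (y - x0))\<^sup>2 \<le> (norm (x - x0) + \<eta>)\<^sup>2" by (rule power_mono) simp
  also have "\<dots> = (norm (x - x0))\<^sup>2 + \<eta> * (2 * norm (x - x0) + \<eta>)" by (simp add: power2_eq_square algebra_simps)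
  also have "\<dots> \<le> (norm (x - x0))\<^sup>2 + \<eta> * (2 * t0 + 1)"
    using \<eta> x by (intro add_left_mono mult_left_mono) auto
  finally show ?thesis using assms(4) \<eta>(3) unfolding cone_gap_def by linarith
qed

text \<open>By the mean value theorem along the segment to the orthogonal projection onto the
  hyperplane \<open>\<alpha> \<bullet> x = 0\<close>, where \<open>\<partial>\<^sub>\<alpha>u\<close> vanishes.\<close>
lemma Du_root_le_hyperplane_distance:
  assumes \<delta>: "0 < \<delta>" and T: "T < t0" and B: "\<forall>p\<in>cone_core (\<delta> / 2) T. norm (D2u p) \<le> B"
    and \<alpha>: "\<alpha> \<in> Rp" "k \<alpha> \<noteq> 0" and t: "0 < t" "t \<le> T" and x: "\<delta> \<le> cone_gap x t"
    and small: "\<bar>\<alpha> \<bullet> x\<bar> < min 1 (\<delta> / (2 * (2 * t0 + 1)))"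
  shows "\<bar>Du (x, t) (\<alpha>, 0)\<bar> \<le> B * \<bar>\<alpha> \<bullet> x\<bar>"
proof -
  define z where "z = x - ((\<alpha> \<bullet> x) / 2) *\<^sub>R \<alpha>"
  have z: "\<alpha> \<bullet> z = 0" "x - z = ((\<alpha> \<bullet> x) / 2) *\<^sub>R \<alpha>"
    using inner_self_root[OF \<alpha>(1)] by (simp_all add: z_def inner_diff_right)
  have norm_xz: "norm (x - z) = \<bar>\<alpha> \<bullet> x\<bar> / 2 * sqrt 2"
    using z(2) norm_root[OF \<alpha>(1)] by simp
  also have "\<dots> \<le> \<bar>\<alpha> \<bullet> x\<bar> / 2 * 2" using sqrt2_less_2 by (intro mult_left_mono) auto
  finally have norm_xz_le: "norm (x - z) \<le> \<bar>\<alpha> \<bullet> x\<bar>" by simp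
  have segment: "((z, t) + s *\<^sub>R (x - z, 0)) \<in> cone_core (\<delta> / 2) T \<inter> cone_interior"
    if "0 \<le> s" "s \<le> 1" for s
  proof -
    have "z + s *\<^sub>R (x - z) - x = (s - 1) *\<^sub>R (x - z)" by (simp add: algebra_simps)
    then have "norm (z + s *\<^sub>R (x - z) - x) = (1 - s) * norm (x - z)" using that by simp
    also have "\<dots> \<le> norm (x - z)" using that by (simp add: mult_left_le_one_le)
    finally have "norm (z + s *\<^sub>R (x - z) - x) \<le> min 1 (\<delta> / (2 * (2 * t0 + 1)))"
      using norm_xz_le small by linarith
    then have "\<delta> / 2 \<le> cone_gap (z + s *\<^sub>R (x - z)) t"
      using cone_gap_half_le_near[OF _ _ \<delta> x] t T by simp
    then show ?thesis using cone_core_subset_interior[of "\<delta> / 2" T] \<delta> T t by (simp add: cone_core_def)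
  qed
  have "((\<lambda>q. Du q (\<alpha>, 0)) has_derivative (\<lambda>v. D2u ((z, t) + s *\<^sub>R (x - z, 0)) v (\<alpha>, 0)))
      (at ((z, t) + s *\<^sub>R (x - z, 0)))" if "0 \<le> s" "s \<le> 1" for s
    using segment[OF that] by (intro has_derivative_blinfun_apply_const Du_has_derivative_at) simp
  from mvt_segment[OF this] obtain s where "s \<in> {0<..<1}"
      "Du ((z, t) + (x - z, 0)) (\<alpha>, 0) - Du (z, t) (\<alpha>, 0) = D2u ((z, t) + s *\<^sub>R (x - z, 0)) (x - z, 0) (\<alpha>, 0)"
    by blast
  moreover have "Du (z, t) (\<alpha>, 0) = 0"
    using Du_root_eq_0_on_hyperplane[OF _ \<alpha>(1) z(1) \<alpha>(2)] segment[of 0] by simp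
  ultimately have "\<bar>Du (x, t) (\<alpha>, 0)\<bar> \<le> norm (D2u ((z, t) + s *\<^sub>R (x - z, 0))) * norm (x - z, 0::real) * norm (\<alpha>, 0::real)"
    using norm_blinfun_apply2_le[of "D2u ((z, t) + s *\<^sub>R (x - z, 0))" "(x - z, 0)" "(\<alpha>, 0)"] by simp
  also have "\<dots> \<le> B * (\<bar>\<alpha> \<bullet> x\<bar> / 2 * sqrt 2) * sqrt 2"
  proof -
    have "norm (D2u ((z, t) + s *\<^sub>R (x - z, 0))) \<le> B"
      using B segment[of s] \<open>s \<in> {0<..<1}\<close> by simp
    then show ?thesis using norm_xz norm_root[OF \<alpha>(1)] by (simp add: norm_Pair mult_right_mono)
  qed
  also have "\<dots> = B * \<bar>\<alpha> \<bullet> x\<bar>" by simp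
  finally show ?thesis .
qed

lemma Du_root_div_inner_bounded:
  assumes \<delta>: "0 < \<delta>" and T: "T < t0"
  obtains Q where "Q \<ge> 0"
    "\<And>\<alpha> x t. \<alpha> \<in> Rp \<Longrightarrow> k \<alpha> \<noteq> 0 \<Longrightarrow> 0 < t \<Longrightarrow> t \<le> T \<Longrightarrow> \<delta> \<le> cone_gap x t \<Longrightarrow> \<alpha> \<bullet> x \<noteq> 0 \<Longrightarrow>
      \<bar>Du (x, t) (\<alpha>, 0)\<bar> / \<bar>\<alpha> \<bullet> x\<bar> \<le> Q"
proof -
  define K where "K = cone_core (\<delta> / 2) T"
  have K: "compact K" "K \<subseteq> cone" using compact_cone_core cone_core_subset \<delta> T by (simp_all add: K_def)
  obtain B1 where B1: "B1 \<ge> 0" "\<And>p. p \<in> K \<Longrightarrow> norm (Du p) \<le> B1"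
    using continuous_on_compact_bound[OF K(1) continuous_on_subset[OF continuous_on_Du K(2)]] by blast
  obtain B2 where B2: "B2 \<ge> 0" "\<And>p. p \<in> K \<Longrightarrow> norm (D2u p) \<le> B2"
    using continuous_on_compact_bound[OF K(1) continuous_on_subset[OF D2u_cont K(2)]] by blast
  define \<eta> where "\<eta> = min 1 (\<delta> / (2 * (2 * t0 + 1)))"
  have \<eta>: "0 < \<eta>" using \<delta> t0_pos by (simp add: \<eta>_def)
  show ?thesis
  proof (rule that[of "2 * B1 / \<eta> + B2"])
    show "0 \<le> 2 * B1 / \<eta> + B2" using B1 B2 \<eta> by simp
    fix \<alpha> x t
    assume \<alpha>: "\<alpha> \<in> Rp" "k \<alpha> \<noteq> 0" and t: "0 < t" "t \<le> T" and x: "\<delta> \<le> cone_gap x t" "\<alpha> \<bullet> x \<noteq> 0"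
    show "\<bar>Du (x, t) (\<alpha>, 0)\<bar> / \<bar>\<alpha> \<bullet> x\<bar> \<le> 2 * B1 / \<eta> + B2"
    proof (cases "\<bar>\<alpha> \<bullet> x\<bar> < \<eta>")
      case True
      have "\<bar>Du (x, t) (\<alpha>, 0)\<bar> \<le> B2 * \<bar>\<alpha> \<bullet> x\<bar>"
        using Du_root_le_hyperplane_distance[OF \<delta> T _ \<alpha> t x(1)] B2(2) True by (simp add: K_def \<eta>_def)
      then have "\<bar>Du (x, t) (\<alpha>, 0)\<bar> / \<bar>\<alpha> \<bullet> x\<bar> \<le> B2" using x(2) by (simp add: divide_le_eq)
      moreover have "0 \<le> 2 * B1 / \<eta>" using B1(1) \<eta> by simp
      ultimately show ?thesis by linarith
    next
      case False
      have "(x, t) \<in> K" using t x \<delta> by (simp add: K_def cone_core_def)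
      have "\<bar>Du (x, t) (\<alpha>, 0)\<bar> \<le> norm (Du (x, t)) * norm (\<alpha>, 0::real)"
        using norm_blinfun[of "Du (x, t)" "(\<alpha>, 0)"] by simp
      also have "\<dots> \<le> B1 * 2"
        using B1 \<open>(x, t) \<in> K\<close> norm_root[OF \<alpha>(1)] sqrt2_less_2 by (intro mult_mono) (auto simp: norm_Pair)
      finally have "\<bar>Du (x, t) (\<alpha>, 0)\<bar> / \<bar>\<alpha> \<bullet> x\<bar> \<le> 2 * B1 / \<eta>"
        using False \<eta> B1(1) by (intro frac_le) auto
      then show ?thesis using B2(1) by (simp add: mult.commute)
    qed
  qed
qed

lemma singular_term_bounded:
  assumes \<delta>: "0 < \<delta>" and T: "T < t0"
  obtains C where "C \<ge> 0"
    "\<And>\<alpha> x t. \<alpha> \<in> Rp \<Longrightarrow> 0 < t \<Longrightarrow> t \<le> T \<Longrightarrow> \<delta> \<le> cone_gap x t \<Longrightarrow> \<alpha> \<bullet> x \<noteq> 0 \<Longrightarrow>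
      \<bar>k \<alpha> * Du (x, t) (\<alpha>, 0) / (\<alpha> \<bullet> x)\<bar> \<le> C"
proof -
  obtain Q where Q: "Q \<ge> 0"
    "\<And>\<alpha> x t. \<alpha> \<in> Rp \<Longrightarrow> k \<alpha> \<noteq> 0 \<Longrightarrow> 0 < t \<Longrightarrow> t \<le> T \<Longrightarrow> \<delta> \<le> cone_gap x t \<Longrightarrow> \<alpha> \<bullet> x \<noteq> 0 \<Longrightarrow>
      \<bar>Du (x, t) (\<alpha>, 0)\<bar> / \<bar>\<alpha> \<bullet> x\<bar> \<le> Q"
    using Du_root_div_inner_bounded[OF \<delta> T] by blast
  define kmax where "kmax = (\<Sum>\<alpha>\<in>Rp. k \<alpha>)"
  have kmax: "k \<alpha> \<le> kmax" if "\<alpha> \<in> Rp" for \<alpha>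
    unfolding kmax_def by (rule member_le_sum[OF that k_nonneg finite_Rp]) simp
  show ?thesis
  proof (rule that[of "kmax * Q"])
    show "0 \<le> kmax * Q" using kmax_def finite_Rp k_nonneg Q by (simp add: sum_nonneg)
    fix \<alpha> x t assume \<alpha>: "\<alpha> \<in> Rp" and rest: "0 < t" "t \<le> T" "\<delta> \<le> cone_gap x t" "\<alpha> \<bullet> x \<noteq> 0"
    show "\<bar>k \<alpha> * Du (x, t) (\<alpha>, 0) / (\<alpha> \<bullet> x)\<bar> \<le> kmax * Q"
    proof (cases "k \<alpha> = 0")
      case False
      have "\<bar>k \<alpha> * Du (x, t) (\<alpha>, 0) / (\<alpha> \<bullet> x)\<bar> = k \<alpha> * (\<bar>Du (x, t) (\<alpha>, 0)\<bar> / \<bar>\<alpha> \<bullet> x\<bar>)"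
        using k_nonneg[OF \<alpha>] by (simp add: abs_mult abs_divide)
      also have "\<dots> \<le> kmax * Q"
        using Q(2)[OF \<alpha> False rest] kmax[OF \<alpha>] k_nonneg[OF \<alpha>] Q(1) by (intro mult_mono) auto
      finally show ?thesis .
    qed (use \<open>0 \<le> kmax * Q\<close> in simp)
  qed
qed

section \<open>The regularized energy\<close>

definition cone_cutoff :: "real \<Rightarrow> 'a \<Rightarrow> real \<Rightarrow> real" where
  "cone_cutoff d x t = cutoff d (cone_gap x t)"

text \<open>\<open>reg_weight \<epsilon> x = (\<Prod>\<alpha>\<in>Rp. ((\<alpha> \<bullet> x)\<^sup>2 + \<epsilon>) powr k \<alpha>)\<close>; at a regular point,
  \<open>reg_weight 0 x\<close> is the Dunkl weight \<open>w\<^sub>k x\<close>.\<close>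
definition reg_weight :: "real \<Rightarrow> 'a \<Rightarrow> real" where
  "reg_weight e x = exp (\<Sum>\<alpha>\<in>Rp. k \<alpha> * ln ((\<alpha> \<bullet> x)\<^sup>2 + e))"

definition reg_weight_dx :: "real \<Rightarrow> 'a \<Rightarrow> 'a \<Rightarrow> real" where
  "reg_weight_dx e b x = reg_weight e x * (\<Sum>\<alpha>\<in>Rp. k \<alpha> * (2 * (\<alpha> \<bullet> x) * (\<alpha> \<bullet> b) / ((\<alpha> \<bullet> x)\<^sup>2 + e)))"

definition u_t :: "'a \<times> real \<Rightarrow> real" where "u_t p = Du p (0, 1)"

definition u_x :: "'a \<Rightarrow> 'a \<times> real \<Rightarrow> real" where "u_x b p = Du p (b, 0)"

definition energy_density :: "'a \<times> real \<Rightarrow> real" where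
  "energy_density p = (u_t p)\<^sup>2 + (\<Sum>b\<in>Basis. (u_x b p)\<^sup>2)"

definition energy_density_dt :: "'a \<times> real \<Rightarrow> real" where
  "energy_density_dt p = 2 * u_t p * D2u p (0, 1) (0, 1) + 2 * (\<Sum>b\<in>Basis. u_x b p * D2u p (0, 1) (b, 0))"

lemma cone_gap_add_scaleR: "cone_gap (x + r *\<^sub>R b) t = (t0 - t)\<^sup>2 - ((norm (x - x0))\<^sup>2 + 2 * r * ((x - x0) \<bullet> b) + r\<^sup>2 * (b \<bullet> b))"
proof -
  have e: "x + r *\<^sub>R b - x0 = (x - x0) + r *\<^sub>R b" by simp
  show ?thesis unfolding cone_gap_def e power2_norm_eq_inner
    by (simp add: inner_add_left inner_add_right inner_commute power2_eq_square algebra_simps)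
qed

lemma has_real_derivative_cone_cutoff_t: "((\<lambda>t. cone_cutoff d x t) has_real_derivative cutoff' d (cone_gap x t) * (- 2 * (t0 - t))) (at t)"
proof -
  have "((\<lambda>t. cone_gap x t) has_real_derivative - 2 * (t0 - t)) (at t)"
    unfolding cone_gap_def by (auto intro!: derivative_eq_intros)
  from DERIV_chain2[OF has_real_derivative_cutoff this] show ?thesis by (simp add: cone_cutoff_def)
qed

lemma has_real_derivative_cone_cutoff_x: "((\<lambda>r. cone_cutoff d (x + r *\<^sub>R b) t) has_real_derivative cutoff' d (cone_gap x t) * (- 2 * ((x - x0) \<bullet> b))) (at 0)"
proof -
  have "((\<lambda>r. cone_gap (x + r *\<^sub>R b) t) has_real_derivative - 2 * ((x - x0) \<bullet> b)) (at 0)"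
    unfolding cone_gap_add_scaleR by (auto intro!: derivative_eq_intros)
  from DERIV_chain2[OF has_real_derivative_cutoff this] show ?thesis by (simp add: cone_cutoff_def)
qed

lemma reg_weight_pos: "0 < reg_weight e x" by (simp add: reg_weight_def)

lemma has_real_derivative_reg_weight:
  assumes e: "0 < e"
  shows "((\<lambda>r. reg_weight e (x + r *\<^sub>R b)) has_real_derivative reg_weight_dx e b x) (at 0)"
proof -
  have pos: "0 < (\<alpha> \<bullet> x + r * (\<alpha> \<bullet> b))\<^sup>2 + e" for \<alpha> r using e by (simp add: add_nonneg_pos)
  have dq: "((\<lambda>r. (\<alpha> \<bullet> x + r * (\<alpha> \<bullet> b))\<^sup>2 + e) has_real_derivative 2 * (\<alpha> \<bullet> x) * (\<alpha> \<bullet> b)) (at 0)" for \<alpha>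
    by (auto intro!: derivative_eq_intros)
  have dl: "((\<lambda>r. k \<alpha> * ln ((\<alpha> \<bullet> x + r * (\<alpha> \<bullet> b))\<^sup>2 + e)) has_real_derivative
      k \<alpha> * (2 * (\<alpha> \<bullet> x) * (\<alpha> \<bullet> b) / ((\<alpha> \<bullet> x)\<^sup>2 + e))) (at 0)" for \<alpha>
    using DERIV_cmult[OF DERIV_chain2[OF DERIV_ln_divide[OF pos[of \<alpha> 0]] dq], of "k \<alpha>"] by simp
  have ds: "((\<lambda>r. \<Sum>\<alpha>\<in>Rp. k \<alpha> * ln ((\<alpha> \<bullet> x + r * (\<alpha> \<bullet> b))\<^sup>2 + e)) has_real_derivative
      (\<Sum>\<alpha>\<in>Rp. k \<alpha> * (2 * (\<alpha> \<bullet> x) * (\<alpha> \<bullet> b) / ((\<alpha> \<bullet> x)\<^sup>2 + e)))) (at 0)"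
    by (rule DERIV_sum) (rule dl)
  have "((\<lambda>r. exp (\<Sum>\<alpha>\<in>Rp. k \<alpha> * ln ((\<alpha> \<bullet> x + r * (\<alpha> \<bullet> b))\<^sup>2 + e))) has_real_derivative
      exp (\<Sum>\<alpha>\<in>Rp. k \<alpha> * ln ((\<alpha> \<bullet> x + 0 * (\<alpha> \<bullet> b))\<^sup>2 + e)) *
      (\<Sum>\<alpha>\<in>Rp. k \<alpha> * (2 * (\<alpha> \<bullet> x) * (\<alpha> \<bullet> b) / ((\<alpha> \<bullet> x)\<^sup>2 + e)))) (at 0)"
    by (rule DERIV_chain2[OF DERIV_exp ds])
  moreover have "(\<lambda>r. reg_weight e (x + r *\<^sub>R b)) = (\<lambda>r. exp (\<Sum>\<alpha>\<in>Rp. k \<alpha> * ln ((\<alpha> \<bullet> x + r * (\<alpha> \<bullet> b))\<^sup>2 + e)))"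
    by (simp add: reg_weight_def inner_add_right fun_eq_iff)
  ultimately show ?thesis by (simp add: reg_weight_dx_def reg_weight_def)
qed

definition energy_integrand :: "real \<Rightarrow> real \<Rightarrow> real \<Rightarrow> 'a \<Rightarrow> real" where
  "energy_integrand d e t x = cone_cutoff d x t * reg_weight e x * energy_density (x, t)"

definition energy_integrand_dt :: "real \<Rightarrow> real \<Rightarrow> real \<Rightarrow> 'a \<Rightarrow> real" where
  "energy_integrand_dt d e t x = cutoff' d (cone_gap x t) * (- 2 * (t0 - t)) * reg_weight e x * energy_density (x, t)
     + cone_cutoff d x t * reg_weight e x * energy_density_dt (x, t)"

definition flux :: "real \<Rightarrow> real \<Rightarrow> 'a \<Rightarrow> real \<Rightarrow> 'a \<Rightarrow> real" where
  "flux d e b t x = cone_cutoff d x t * reg_weight e x * u_t (x, t) * u_x b (x, t)"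

definition flux_dx :: "real \<Rightarrow> real \<Rightarrow> 'a \<Rightarrow> real \<Rightarrow> 'a \<Rightarrow> real" where
  "flux_dx d e b t x =
     cutoff' d (cone_gap x t) * (- 2 * ((x - x0) \<bullet> b)) * reg_weight e x * u_t (x, t) * u_x b (x, t)
   + cone_cutoff d x t * reg_weight_dx e b x * u_t (x, t) * u_x b (x, t)
   + cone_cutoff d x t * reg_weight e x * D2u (x, t) (b, 0) (0, 1) * u_x b (x, t)
   + cone_cutoff d x t * reg_weight e x * u_t (x, t) * D2u (x, t) (b, 0) (b, 0)"

lemma has_real_derivative_Du_t:
  assumes "(x, t) \<in> cone" "\<And>t'. t' \<in> X \<Longrightarrow> (x, t') \<in> cone" "t \<in> X"
  shows "((\<lambda>t'. Du (x, t') v) has_real_derivative D2u (x, t) (0, 1) v) (at t within X)"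
proof -
  have eqp: "(x, 0) + t *\<^sub>R (0, 1) = (x, t)" by simp
  have D: "((\<lambda>p. Du p v) has_derivative (\<lambda>h. D2u (x, t) h v)) (at ((x, 0) + t *\<^sub>R (0, 1)) within cone)"
    unfolding eqp using has_derivative_blinfun_apply_const[of Du "D2u (x, t)" "(x, t)" cone v] Du_deriv assms(1) by auto
  have "((\<lambda>r. Du ((x, 0) + r *\<^sub>R (0, 1)) v) has_real_derivative D2u (x, t) (0, 1) v) (at t within X)"
    by (rule has_real_derivative_along_line[OF D]) (use assms(2) in simp)
  then show ?thesis by simp
qed

lemma has_real_derivative_Du_x:
  assumes "(x, t) \<in> cone_interior"
  shows "((\<lambda>r. Du (x + r *\<^sub>R b, t) v) has_real_derivative D2u (x, t) (b, 0) v) (at 0)"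
proof -
  have eqp: "(x, t) + 0 *\<^sub>R (b, 0) = (x, t)" by simp
  have D: "((\<lambda>p. Du p v) has_derivative (\<lambda>h. D2u (x, t) h v)) (at ((x, t) + 0 *\<^sub>R (b, 0)) within UNIV)"
    unfolding eqp using has_derivative_blinfun_apply_const[OF Du_has_derivative_at[OF assms], of v] by simp
  have "((\<lambda>r. Du ((x, t) + r *\<^sub>R (b, 0)) v) has_real_derivative D2u (x, t) (b, 0) v) (at 0 within UNIV)"
    by (rule has_real_derivative_along_line[OF D]) auto
  then show ?thesis by simp
qed

lemma open_cone_gap_less_t: "open {t'. cone_gap x t' < d}"
  unfolding cone_gap_def by (intro open_Collect_less continuous_intros)

lemma open_cone_gap_less_x: "open {r. cone_gap (x + r *\<^sub>R b) t < d}"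
  unfolding cone_gap_def by (intro open_Collect_less continuous_intros)

lemma has_real_derivative_energy_density_t:
  assumes xt: "(x, t) \<in> cone" and X: "\<And>t'. t' \<in> X \<Longrightarrow> (x, t') \<in> cone" "t \<in> X"
  shows "((\<lambda>t'. energy_density (x, t')) has_real_derivative energy_density_dt (x, t)) (at t within X)"
proof -
  have "((\<lambda>t'. u_t (x, t')) has_real_derivative D2u (x, t) (0, 1) (0, 1)) (at t within X)"
    "((\<lambda>t'. u_x b (x, t')) has_real_derivative D2u (x, t) (0, 1) (b, 0)) (at t within X)" for b
    unfolding u_t_def u_x_def by (rule has_real_derivative_Du_t[OF xt X]; simp)+
  then have "((\<lambda>t'. u_t (x, t') * u_t (x, t') + (\<Sum>b\<in>Basis. u_x b (x, t') * u_x b (x, t'))) has_real_derivative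
      u_t (x, t) * D2u (x, t) (0, 1) (0, 1) + D2u (x, t) (0, 1) (0, 1) * u_t (x, t)
      + (\<Sum>b\<in>Basis. u_x b (x, t) * D2u (x, t) (0, 1) (b, 0) + D2u (x, t) (0, 1) (b, 0) * u_x b (x, t)))
      (at t within X)"
    by (intro DERIV_add DERIV_mult' DERIV_sum)
  then show ?thesis
    by (simp add: energy_density_def energy_density_dt_def power2_eq_square sum.distrib[symmetric]
        sum_distrib_left algebra_simps)
qed

lemma has_real_derivative_energy_integrand:
  assumes d: "0 < d" and T: "T < t0" and t: "t \<in> {0..T}"
  shows "((\<lambda>t. energy_integrand d e t x) has_real_derivative energy_integrand_dt d e t x) (at t within {0..T})"
proof (cases "cone_gap x t < d")
  case True
  have "((\<lambda>t. 0) has_real_derivative 0) (at t)" by simp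
  then have "((\<lambda>t. energy_integrand d e t x) has_real_derivative 0) (at t)"
  proof (rule has_field_derivative_transform_within_open[OF _ open_cone_gap_less_t[of x d]])
    show "t \<in> {t'. cone_gap x t' < d}" using True by simp
    fix t' assume "t' \<in> {t'. cone_gap x t' < d}"
    then show "0 = energy_integrand d e t' x" by (simp add: energy_integrand_def cone_cutoff_def cutoff_eq_0)
  qed
  moreover have "energy_integrand_dt d e t x = 0" using True by (simp add: energy_integrand_dt_def cone_cutoff_def cutoff_eq_0 cutoff'_eq_0)
  ultimately show ?thesis using has_field_derivative_at_within by simp
next
  case False
  then have sp: "0 < cone_gap x t" using d by simp
  have tT: "0 \<le> t" "t \<le> T" using t by auto
  define c where "c = t0 - norm (x - x0)"
  have tc: "t < c" using norm_less_of_cone_gap_pos[OF sp] tT T by (simp add: c_def)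
  define X where "X = {0..T} \<inter> {..c}"
  have tX: "t \<in> X" using t tc by (simp add: X_def)
  have XL: "(x, t') \<in> cone" if "t' \<in> X" for t' using that by (auto simp: X_def c_def light_cone_def)
  have xt: "(x, t) \<in> cone" using XL[OF tX] .
  have dpsi: "((\<lambda>t. cone_cutoff d x t) has_real_derivative cutoff' d (cone_gap x t) * (- 2 * (t0 - t))) (at t within X)"
    using has_real_derivative_cone_cutoff_t has_field_derivative_at_within by blast
  have den: "((\<lambda>t'. energy_density (x, t')) has_real_derivative energy_density_dt (x, t)) (at t within X)"
    by (rule has_real_derivative_energy_density_t[OF xt XL tX])
  have dw: "((\<lambda>t'. reg_weight e x) has_real_derivative 0) (at t within X)" by simp
  have dX: "((\<lambda>t. energy_integrand d e t x) has_real_derivative energy_integrand_dt d e t x) (at t within X)"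
    unfolding energy_integrand_def by (rule DERIV_cong[OF DERIV_mult'[OF DERIV_mult'[OF dpsi dw] den]]) (simp add: energy_integrand_dt_def algebra_simps)
  have "at t within X = at t within {0..T}"
    by (rule at_within_nhd[of _ "{..<c}"]) (use tc in \<open>auto simp: X_def\<close>)
  then show ?thesis using dX by simp
qed

lemma has_real_derivative_flux:
  assumes d: "0 < d" and e: "0 < e" and T: "T < t0" and t: "0 < t" "t \<le> T"
  shows "((\<lambda>r. flux d e b t (x + r *\<^sub>R b)) has_real_derivative flux_dx d e b t x) (at 0)"
proof (cases "cone_gap x t < d")
  case True
  have "((\<lambda>r. 0) has_real_derivative 0) (at 0)" by simp
  then have "((\<lambda>r. flux d e b t (x + r *\<^sub>R b)) has_real_derivative 0) (at 0)"
  proof (rule has_field_derivative_transform_within_open[OF _ open_cone_gap_less_x[of x b t d]])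
    show "0 \<in> {r. cone_gap (x + r *\<^sub>R b) t < d}" using True by simp
    fix r assume "r \<in> {r. cone_gap (x + r *\<^sub>R b) t < d}"
    then show "0 = flux d e b t (x + r *\<^sub>R b)" by (simp add: flux_def cone_cutoff_def cutoff_eq_0)
  qed
  moreover have "flux_dx d e b t x = 0" using True by (simp add: flux_dx_def cone_cutoff_def cutoff_eq_0 cutoff'_eq_0)
  ultimately show ?thesis by simp
next
  case False
  then have sp: "0 < cone_gap x t" using d by simp
  have xt: "(x, t) \<in> cone_interior" using norm_less_of_cone_gap_pos[OF sp] t T by (simp add: cone_interior_def)
  have dpsi: "((\<lambda>r. cone_cutoff d (x + r *\<^sub>R b) t) has_real_derivative cutoff' d (cone_gap x t) * (- 2 * ((x - x0) \<bullet> b))) (at 0)"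
    by (rule has_real_derivative_cone_cutoff_x)
  have dw: "((\<lambda>r. reg_weight e (x + r *\<^sub>R b)) has_real_derivative reg_weight_dx e b x) (at 0)" by (rule has_real_derivative_reg_weight[OF e])
  have dut: "((\<lambda>r. u_t (x + r *\<^sub>R b, t)) has_real_derivative D2u (x, t) (b, 0) (0, 1)) (at 0)"
    unfolding u_t_def by (rule has_real_derivative_Du_x[OF xt])
  have dg: "((\<lambda>r. u_x b (x + r *\<^sub>R b, t)) has_real_derivative D2u (x, t) (b, 0) (b, 0)) (at 0)"
    unfolding u_x_def by (rule has_real_derivative_Du_x[OF xt])
  show ?thesis
    unfolding flux_def by (rule DERIV_cong[OF DERIV_mult'[OF DERIV_mult'[OF DERIV_mult'[OF dpsi dw] dut] dg]]) (simp add: flux_dx_def algebra_simps)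
qed

lemma continuous_on_Du_compose:
  assumes "continuous_on S g" "g ` S \<subseteq> cone"
  shows "continuous_on S (\<lambda>y. Du (g y) v)"
  using blinfun.continuous_on[OF continuous_on_compose2[OF continuous_on_Du assms(1,2)] continuous_on_const] by simp

lemma continuous_on_D2u_compose:
  assumes "continuous_on S g" "g ` S \<subseteq> cone"
  shows "continuous_on S (\<lambda>y. D2u (g y) v w)"
proof -
  have "continuous_on S (\<lambda>y. D2u (g y) v)"
    using blinfun.continuous_on[OF continuous_on_compose2[OF D2u_cont assms(1,2)] continuous_on_const] by simp
  then show ?thesis using blinfun.continuous_on[OF _ continuous_on_const] by blast
qed

lemma continuous_on_reg_weight:
  assumes "0 < e" "continuous_on S h"
  shows "continuous_on S (\<lambda>y. reg_weight e (h y))"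
proof -
  have ne: "\<And>z::real. z\<^sup>2 + e \<noteq> 0" using assms(1) by (metis add_nonneg_pos less_irrefl zero_le_power2)
  show ?thesis unfolding reg_weight_def by (intro continuous_intros assms(2)) (use ne in auto)
qed

lemma continuous_on_reg_weight_dx:
  assumes "0 < e" "continuous_on S h"
  shows "continuous_on S (\<lambda>y. reg_weight_dx e b (h y))"
proof -
  have ne: "\<And>z::real. z\<^sup>2 + e \<noteq> 0" using assms(1) by (metis add_nonneg_pos less_irrefl zero_le_power2)
  show ?thesis unfolding reg_weight_dx_def by (intro continuous_intros continuous_on_reg_weight assms) (use ne in auto)
qed

lemma continuous_on_cone_gap: "continuous_on S (\<lambda>x. cone_gap x t)"
  unfolding cone_gap_def by (intro continuous_intros)

text \<open>The derivatives of \<open>u\<close> are only known on the cone; the integrands are continuous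
  everywhere because the cut-off vanishes near the lateral boundary.\<close>
lemma continuous_on_energy_integrand_dt:
  assumes d: "0 < d" and e: "0 < e" and T: "T < t0"
  shows "continuous_on ({0..T} \<times> UNIV) (\<lambda>(t, x). energy_integrand_dt d e t x)"
proof -
  define U where "U = ({0..T} \<times> (UNIV :: 'a set))"
  define K where "K = {y :: real \<times> 'a. d \<le> cone_gap (snd y) (fst y) \<and> fst y \<le> T}"
  define A where "A = {y :: real \<times> 'a. norm (snd y - x0) < t0 - fst y}"
  have closed: "closed K" unfolding K_def cone_gap_def by (intro closed_Collect_conj closed_Collect_le continuous_intros)
  have open_A: "open A" unfolding A_def by (intro open_Collect_less continuous_intros)
  have KA: "K \<subseteq> A"
  proof
    fix y assume "y \<in> K"
    then have "0 < cone_gap (snd y) (fst y)" "fst y < t0" using d T by (auto simp: K_def)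
    then show "y \<in> A" using norm_less_of_cone_gap_pos by (auto simp: A_def)
  qed
  define g where "g y = (snd y, fst y)" for y :: "real \<times> 'a"
  have cg: "continuous_on S g" for S unfolding g_def by (intro continuous_intros)
  have gL: "g ` (A \<inter> U) \<subseteq> cone" by (auto simp: g_def A_def U_def light_cone_def)
  note cD = continuous_on_Du_compose[OF cg gL] and cD2' = continuous_on_D2u_compose[OF cg gL]
  have cH1: "continuous_on (A \<inter> U) (\<lambda>y. (- 2 * (t0 - fst y)) * reg_weight e (snd y) * energy_density (snd y, fst y))"
    using cD[unfolded g_def] unfolding energy_density_def u_t_def u_x_def
    by (intro cD[unfolded g_def] cD2'[unfolded g_def] continuous_intros continuous_on_reg_weight e)
  have cH2: "continuous_on (A \<inter> U) (\<lambda>y. reg_weight e (snd y) * energy_density_dt (snd y, fst y))"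
    using cD[unfolded g_def] cD2'[unfolded g_def] unfolding energy_density_dt_def u_t_def u_x_def
    by (intro cD[unfolded g_def] cD2'[unfolded g_def] continuous_intros continuous_on_reg_weight e)
  have z: "\<And>y. y \<in> U \<Longrightarrow> y \<notin> K \<Longrightarrow> cutoff' d (cone_gap (snd y) (fst y)) = 0"
     "\<And>y. y \<in> U \<Longrightarrow> y \<notin> K \<Longrightarrow> cutoff d (cone_gap (snd y) (fst y)) = 0"
    by (auto simp: U_def K_def cutoff_eq_0 cutoff'_eq_0)
  have c1: "continuous_on U (\<lambda>y. cutoff' d (cone_gap (snd y) (fst y)) * ((- 2 * (t0 - fst y)) * reg_weight e (snd y) * energy_density (snd y, fst y)))"
    by (rule continuous_on_mult_vanishing_outside[OF _ closed z(1) open_A KA cH1])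
       (simp add: cutoff'_def[abs_def] cone_gap_def continuous_intros)
  have c2: "continuous_on U (\<lambda>y. cutoff d (cone_gap (snd y) (fst y)) * (reg_weight e (snd y) * energy_density_dt (snd y, fst y)))"
    by (rule continuous_on_mult_vanishing_outside[OF _ closed z(2) open_A KA cH2])
       (simp add: cutoff_def[abs_def] cone_gap_def continuous_intros)
  have "continuous_on U (\<lambda>y. cutoff' d (cone_gap (snd y) (fst y)) * ((- 2 * (t0 - fst y)) * reg_weight e (snd y) * energy_density (snd y, fst y))
       + cutoff d (cone_gap (snd y) (fst y)) * (reg_weight e (snd y) * energy_density_dt (snd y, fst y)))"
    by (rule continuous_on_add[OF c1 c2])
  moreover have "(\<lambda>(t, x). energy_integrand_dt d e t x) = (\<lambda>y. cutoff' d (cone_gap (snd y) (fst y)) * ((- 2 * (t0 - fst y)) * reg_weight e (snd y) * energy_density (snd y, fst y))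
       + cutoff d (cone_gap (snd y) (fst y)) * (reg_weight e (snd y) * energy_density_dt (snd y, fst y)))"
    by (auto simp: energy_integrand_dt_def cone_cutoff_def fun_eq_iff algebra_simps)
  ultimately show ?thesis by (simp add: U_def)
qed

lemma continuous_on_mult_cone_cutoff:
  fixes H :: "'a \<Rightarrow> real" and cf :: "real \<Rightarrow> real"
  assumes d: "0 < d" and T: "T < t0" and t: "0 \<le> t" "t \<le> T"
    and H: "continuous_on {x. norm (x - x0) < t0 - t} H"
    and cf: "continuous_on UNIV (\<lambda>x. cf (cone_gap x t))" and cz: "\<And>r. r \<le> d \<Longrightarrow> cf r = 0"
  shows "continuous_on UNIV (\<lambda>x. cf (cone_gap x t) * H x)"
proof (rule continuous_on_mult_vanishing_outside[where K="{x. d \<le> cone_gap x t}" and A="{x. norm (x - x0) < t0 - t}"])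
  show "continuous_on UNIV (\<lambda>x. cf (cone_gap x t))" by (rule cf)
  show "closed {x. d \<le> cone_gap x t}" unfolding cone_gap_def by (intro closed_Collect_le continuous_intros)
  show "open {x. norm (x - x0) < t0 - t}" by (intro open_Collect_less continuous_intros)
  show "\<And>y. y \<in> UNIV \<Longrightarrow> y \<notin> {x. d \<le> cone_gap x t} \<Longrightarrow> cf (cone_gap y t) = 0" using cz by auto
  show "{x. d \<le> cone_gap x t} \<subseteq> {x. norm (x - x0) < t0 - t}"
    using norm_less_of_cone_gap_pos d t T by force
  show "continuous_on ({x. norm (x - x0) < t0 - t} \<inter> UNIV) H" using H by simp
qed

lemma continuous_on_Du_slice: "0 \<le> t \<Longrightarrow> continuous_on {x. norm (x - x0) < t0 - t} (\<lambda>x. Du (x, t) v)"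
  and continuous_on_D2u_slice: "0 \<le> t \<Longrightarrow> continuous_on {x. norm (x - x0) < t0 - t} (\<lambda>x. D2u (x, t) v w)"
  by (rule continuous_on_Du_compose continuous_on_D2u_compose, intro continuous_intros, auto simp: light_cone_def)+

lemma continuous_on_energy_integrand:
  assumes d: "0 < d" and e: "0 < e" and T: "T < t0" and t: "0 \<le> t" "t \<le> T"
  shows "continuous_on UNIV (energy_integrand d e t)"
proof -
  note cD = continuous_on_Du_slice[OF t(1)]
  have "continuous_on UNIV (\<lambda>x. cutoff d (cone_gap x t) * (reg_weight e x * energy_density (x, t)))"
  proof (rule continuous_on_mult_cone_cutoff[OF d T t])
    show "continuous_on {x. norm (x - x0) < t0 - t} (\<lambda>x. reg_weight e x * energy_density (x, t))"
      unfolding energy_density_def u_t_def u_x_def by (intro cD continuous_intros continuous_on_reg_weight e)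
    show "continuous_on UNIV (\<lambda>x. cutoff d (cone_gap x t))" by (rule continuous_on_compose2[OF continuous_on_cutoff continuous_on_cone_gap]) auto
  qed (rule cutoff_eq_0)
  then show ?thesis by (simp add: energy_integrand_def[abs_def] cone_cutoff_def mult.assoc)
qed

lemma continuous_on_flux:
  assumes d: "0 < d" and e: "0 < e" and T: "T < t0" and t: "0 \<le> t" "t \<le> T"
  shows "continuous_on UNIV (flux d e b t)"
proof -
  note cD = continuous_on_Du_slice[OF t(1)]
  have "continuous_on UNIV (\<lambda>x. cutoff d (cone_gap x t) * (reg_weight e x * u_t (x, t) * u_x b (x, t)))"
  proof (rule continuous_on_mult_cone_cutoff[OF d T t])
    show "continuous_on {x. norm (x - x0) < t0 - t} (\<lambda>x. reg_weight e x * u_t (x, t) * u_x b (x, t))"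
      unfolding u_t_def u_x_def by (intro cD continuous_intros continuous_on_reg_weight e)
    show "continuous_on UNIV (\<lambda>x. cutoff d (cone_gap x t))" by (rule continuous_on_compose2[OF continuous_on_cutoff continuous_on_cone_gap]) auto
  qed (rule cutoff_eq_0)
  then show ?thesis by (simp add: flux_def[abs_def] cone_cutoff_def mult.assoc)
qed

lemma continuous_on_flux_dx:
  assumes d: "0 < d" and e: "0 < e" and T: "T < t0" and t: "0 \<le> t" "t \<le> T"
  shows "continuous_on UNIV (flux_dx d e b t)"
proof -
  note cD = continuous_on_Du_slice[OF t(1)] and cD2' = continuous_on_D2u_slice[OF t(1)]
  have c1: "continuous_on UNIV (\<lambda>x. cutoff' d (cone_gap x t) * ((- 2 * ((x - x0) \<bullet> b)) * reg_weight e x * u_t (x, t) * u_x b (x, t)))"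
  proof (rule continuous_on_mult_cone_cutoff[OF d T t])
    show "continuous_on {x. norm (x - x0) < t0 - t} (\<lambda>x. (- 2 * ((x - x0) \<bullet> b)) * reg_weight e x * u_t (x, t) * u_x b (x, t))"
      unfolding u_t_def u_x_def by (intro cD continuous_intros continuous_on_reg_weight e)
    show "continuous_on UNIV (\<lambda>x. cutoff' d (cone_gap x t))" by (rule continuous_on_compose2[OF continuous_on_cutoff' continuous_on_cone_gap]) auto
  qed (rule cutoff'_eq_0)
  have c2: "continuous_on UNIV (\<lambda>x. cutoff d (cone_gap x t) * (reg_weight_dx e b x * u_t (x, t) * u_x b (x, t)
      + reg_weight e x * D2u (x, t) (b, 0) (0, 1) * u_x b (x, t) + reg_weight e x * u_t (x, t) * D2u (x, t) (b, 0) (b, 0)))"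
  proof (rule continuous_on_mult_cone_cutoff[OF d T t])
    show "continuous_on {x. norm (x - x0) < t0 - t} (\<lambda>x. reg_weight_dx e b x * u_t (x, t) * u_x b (x, t)
      + reg_weight e x * D2u (x, t) (b, 0) (0, 1) * u_x b (x, t) + reg_weight e x * u_t (x, t) * D2u (x, t) (b, 0) (b, 0))"
      unfolding u_t_def u_x_def by (intro cD cD2' continuous_intros continuous_on_reg_weight continuous_on_reg_weight_dx e)
    show "continuous_on UNIV (\<lambda>x. cutoff d (cone_gap x t))" by (rule continuous_on_compose2[OF continuous_on_cutoff continuous_on_cone_gap]) auto
  qed (rule cutoff_eq_0)
  have "continuous_on UNIV (\<lambda>x. cutoff' d (cone_gap x t) * ((- 2 * ((x - x0) \<bullet> b)) * reg_weight e x * u_t (x, t) * u_x b (x, t))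
     + cutoff d (cone_gap x t) * (reg_weight_dx e b x * u_t (x, t) * u_x b (x, t)
      + reg_weight e x * D2u (x, t) (b, 0) (0, 1) * u_x b (x, t) + reg_weight e x * u_t (x, t) * D2u (x, t) (b, 0) (b, 0)))"
    by (rule continuous_on_add[OF c1 c2])
  then show ?thesis by (simp add: flux_dx_def[abs_def] cone_cutoff_def algebra_simps)
qed

definition grad_x :: "'a \<times> real \<Rightarrow> 'a" where "grad_x p = (\<Sum>b\<in>Basis. u_x b p *\<^sub>R b)"

lemma inner_grad_x: "v \<bullet> grad_x p = (\<Sum>b\<in>Basis. (v \<bullet> b) * u_x b p)"
  by (simp add: grad_x_def inner_sum_right mult.commute)

lemma energy_density_eq: "energy_density p = (u_t p)\<^sup>2 + grad_x p \<bullet> grad_x p"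
  using euclidean_inner[of "grad_x p" "grad_x p"]
  by (simp add: energy_density_def grad_x_def inner_sum_left_Basis power2_eq_square)

lemma energy_density_nonneg: "0 \<le> energy_density p"
  by (simp add: energy_density_def sum_nonneg)

lemma Du_sum_Basis: "(\<Sum>b\<in>Basis. (v \<bullet> b) * Du p (b, 0)) = Du p (v, 0)"
proof -
  have "(v, 0::real) = (\<Sum>b\<in>Basis. (v \<bullet> b) *\<^sub>R (b, 0::real))"
    by (simp add: prod_eq_iff fst_sum snd_sum euclidean_representation)
  then have "Du p (v, 0) = (\<Sum>b\<in>Basis. Du p ((v \<bullet> b) *\<^sub>R (b, 0::real)))"
    by (simp only: blinfun.sum_right)
  also have "\<dots> = (\<Sum>b\<in>Basis. (v \<bullet> b) * Du p (b, 0))"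
    by (rule sum.cong[OF refl]) (simp only: blinfun.scaleR_right real_scaleR_def)
  finally show ?thesis by simp
qed

text \<open>Because the cone is characteristic, the boundary term produced by the cut-off has a sign.\<close>
lemma cutoff_term_nonpos:
  assumes "0 \<le> c" "0 < w" "norm (x - x0) \<le> t0 - t"
  shows "- 2 * c * w * ((t0 - t) * energy_density (x, t) - 2 * u_t (x, t) * (\<Sum>b\<in>Basis. ((x - x0) \<bullet> b) * u_x b (x, t))) \<le> 0"
proof -
  have "2 * u_t (x, t) * ((x - x0) \<bullet> grad_x (x, t)) \<le> (t0 - t) * energy_density (x, t)"
    using two_mul_inner_le_of_norm_le[OF assms(3)] by (simp add: energy_density_eq)
  then show ?thesis using assms(1,2) by (simp add: inner_grad_x mult_nonneg_nonneg)
qed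

lemma sum_reg_weight_dx:
  "(\<Sum>b\<in>Basis. reg_weight_dx e b x * u_x b p)
    = reg_weight e x * (\<Sum>\<alpha>\<in>Rp. k \<alpha> * (2 * (\<alpha> \<bullet> x) / ((\<alpha> \<bullet> x)\<^sup>2 + e)) * Du p (\<alpha>, 0))"
proof -
  have "(\<Sum>b\<in>Basis. reg_weight_dx e b x * u_x b p)
      = reg_weight e x * (\<Sum>\<alpha>\<in>Rp. k \<alpha> * (2 * (\<alpha> \<bullet> x) / ((\<alpha> \<bullet> x)\<^sup>2 + e)) * (\<Sum>b\<in>Basis. (\<alpha> \<bullet> b) * u_x b p))"
    unfolding reg_weight_dx_def sum_distrib_right sum_distrib_left
    by (subst sum.swap) (simp add: mult_ac)
  then show ?thesis by (simp add: u_x_def Du_sum_Basis)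
qed

lemma sum_flux_dx:
  "(\<Sum>b\<in>Basis. flux_dx d e b t x) =
     - 2 * cutoff' d (cone_gap x t) * reg_weight e x * u_t (x, t) * (\<Sum>b\<in>Basis. ((x - x0) \<bullet> b) * u_x b (x, t))
   + cone_cutoff d x t * u_t (x, t) * reg_weight e x * (\<Sum>\<alpha>\<in>Rp. k \<alpha> * (2 * (\<alpha> \<bullet> x) / ((\<alpha> \<bullet> x)\<^sup>2 + e)) * Du (x, t) (\<alpha>, 0))
   + cone_cutoff d x t * reg_weight e x * (\<Sum>b\<in>Basis. D2u (x, t) (b, 0) (0, 1) * u_x b (x, t))
   + cone_cutoff d x t * reg_weight e x * u_t (x, t) * (\<Sum>b\<in>Basis. D2u (x, t) (b, 0) (b, 0))"
proof -
  have "(\<Sum>b\<in>Basis. flux_dx d e b t x) =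
      (\<Sum>b\<in>Basis. - 2 * cutoff' d (cone_gap x t) * reg_weight e x * u_t (x, t) * (((x - x0) \<bullet> b) * u_x b (x, t)))
    + (\<Sum>b\<in>Basis. cone_cutoff d x t * u_t (x, t) * (reg_weight_dx e b x * u_x b (x, t)))
    + (\<Sum>b\<in>Basis. cone_cutoff d x t * reg_weight e x * (D2u (x, t) (b, 0) (0, 1) * u_x b (x, t)))
    + (\<Sum>b\<in>Basis. cone_cutoff d x t * reg_weight e x * u_t (x, t) * D2u (x, t) (b, 0) (b, 0))"
    unfolding flux_dx_def sum.distrib[symmetric] by (rule sum.cong) (simp_all add: algebra_simps)
  then show ?thesis by (simp only: sum_distrib_left[symmetric] sum_reg_weight_dx mult.assoc)
qed

text \<open>The drift term of \<open>L\<^sub>k\<close> and the gradient of the regularized weight cancel up to a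
  remainder carrying the factor \<open>\<epsilon> / ((\<alpha> \<bullet> x)\<^sup>2 + \<epsilon>)\<close>.\<close>
lemma drift_minus_weight_gradient:
  assumes "regular x" "0 < e"
  shows "2 * (\<Sum>\<alpha>\<in>Rp. k \<alpha> * c \<alpha> / (\<alpha> \<bullet> x)) - (\<Sum>\<alpha>\<in>Rp. k \<alpha> * (2 * (\<alpha> \<bullet> x) / ((\<alpha> \<bullet> x)\<^sup>2 + e)) * c \<alpha>)
    = 2 * (\<Sum>\<alpha>\<in>Rp. k \<alpha> * (c \<alpha> / (\<alpha> \<bullet> x)) * (e / ((\<alpha> \<bullet> x)\<^sup>2 + e)))"
proof -
  have "2 * (k \<alpha> * c \<alpha> / (\<alpha> \<bullet> x)) - k \<alpha> * (2 * (\<alpha> \<bullet> x) / ((\<alpha> \<bullet> x)\<^sup>2 + e)) * c \<alpha>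
      = 2 * (k \<alpha> * (c \<alpha> / (\<alpha> \<bullet> x)) * (e / ((\<alpha> \<bullet> x)\<^sup>2 + e)))" if "\<alpha> \<in> Rp" for \<alpha>
  proof -
    have "\<alpha> \<bullet> x \<noteq> 0" "(\<alpha> \<bullet> x)\<^sup>2 + e \<noteq> 0"
      using assms that by (auto simp: regular_def add_nonneg_pos[THEN less_imp_neq, symmetric])
    then show ?thesis by (simp add: field_simps power2_eq_square)
  qed
  then show ?thesis by (simp add: sum_distrib_left sum_subtractf[symmetric])
qed

lemma energy_identity:
  assumes e: "0 < e" and xt: "(x, t) \<in> cone_interior" and x: "regular x"
  shows "energy_integrand_dt d e t x - 2 * (\<Sum>b\<in>Basis. flux_dx d e b t x) =
    - 2 * cutoff' d (cone_gap x t) * reg_weight e x * ((t0 - t) * energy_density (x, t)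
        - 2 * u_t (x, t) * (\<Sum>b\<in>Basis. ((x - x0) \<bullet> b) * u_x b (x, t)))
    + 4 * cone_cutoff d x t * reg_weight e x * u_t (x, t)
        * (\<Sum>\<alpha>\<in>Rp. k \<alpha> * (Du (x, t) (\<alpha>, 0) / (\<alpha> \<bullet> x)) * (e / ((\<alpha> \<bullet> x)\<^sup>2 + e)))"
proof -
  define lap where "lap = (\<Sum>b\<in>Basis. D2u (x, t) (b, 0) (b, 0))"
  define drift where "drift = (\<Sum>\<alpha>\<in>Rp. k \<alpha> * Du (x, t) (\<alpha>, 0) / (\<alpha> \<bullet> x))"
  define Sr where "Sr = (\<Sum>\<alpha>\<in>Rp. k \<alpha> * (2 * (\<alpha> \<bullet> x) / ((\<alpha> \<bullet> x)\<^sup>2 + e)) * Du (x, t) (\<alpha>, 0))"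
  have u_tt: "D2u (x, t) (0, 1) (0, 1) = lap + 2 * drift"
    using wave_equation[OF subsetD[OF cone_interior_subset xt] x] by (simp add: lap_def drift_def)
  have mixed: "(\<Sum>b\<in>Basis. u_x b (x, t) * D2u (x, t) (0, 1) (b, 0)) = (\<Sum>b\<in>Basis. D2u (x, t) (b, 0) (0, 1) * u_x b (x, t))"
    using D2u_symmetric[OF xt] by (simp add: mult.commute)
  define Se where "Se = (\<Sum>\<alpha>\<in>Rp. k \<alpha> * (Du (x, t) (\<alpha>, 0) / (\<alpha> \<bullet> x)) * (e / ((\<alpha> \<bullet> x)\<^sup>2 + e)))"
  have "2 * drift - Sr = 2 * Se"
    unfolding drift_def Sr_def Se_def by (rule drift_minus_weight_gradient[OF x e])
  then have Sr_eq: "Sr = 2 * drift - 2 * Se" by simp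
  show ?thesis
    unfolding sum_flux_dx energy_integrand_dt_def energy_density_dt_def mixed u_tt
      Sr_def[symmetric] lap_def[symmetric] Se_def[symmetric] Sr_eq
    by (simp add: algebra_simps)
qed

section \<open>Energy estimate and uniqueness\<close>

definition defect :: "real \<Rightarrow> 'a \<Rightarrow> real" where "defect e x = (\<Sum>\<alpha>\<in>Rp. e / ((\<alpha> \<bullet> x)\<^sup>2 + e))"

lemma defect_nonneg: "0 < e \<Longrightarrow> 0 \<le> defect e x"
  unfolding defect_def by (intro sum_nonneg) (simp add: add_nonneg_pos)

lemma reg_weight_mono:
  assumes "regular x \<or> 0 < e" "0 \<le> e" "e \<le> e'"
  shows "reg_weight e x \<le> reg_weight e' x"
  unfolding reg_weight_def exp_le_cancel_iff
proof (rule sum_mono)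
  fix \<alpha> assume "\<alpha> \<in> Rp"
  then have "0 < (\<alpha> \<bullet> x)\<^sup>2 + e" using assms by (auto simp: regular_def add_nonneg_pos add_pos_nonneg)
  then have "ln ((\<alpha> \<bullet> x)\<^sup>2 + e) \<le> ln ((\<alpha> \<bullet> x)\<^sup>2 + e')" using assms(3) by simp
  then show "k \<alpha> * ln ((\<alpha> \<bullet> x)\<^sup>2 + e) \<le> k \<alpha> * ln ((\<alpha> \<bullet> x)\<^sup>2 + e')"
    using k_nonneg[OF \<open>\<alpha> \<in> Rp\<close>] by (rule mult_left_mono)
qed

lemma cone_cutoff_le:
  assumes "0 \<le> d" "0 \<le> t" "t \<le> t0"
  shows "cone_cutoff d x t \<le> (t0\<^sup>2)\<^sup>2"
proof -
  have "cone_gap x t \<le> (t0 - t)\<^sup>2" by (simp add: cone_gap_def)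
  also have "\<dots> \<le> t0\<^sup>2" using assms by (intro power_mono) auto
  finally have "max (cone_gap x t - d) 0 \<le> t0\<^sup>2" using assms(1) by simp
  then show ?thesis unfolding cone_cutoff_def cutoff_def by (rule power_mono) simp
qed

lemma abs_sum_regularized_singular_le:
  assumes e: "0 < e" and x: "regular x" and C: "\<And>\<alpha>. \<alpha> \<in> Rp \<Longrightarrow> \<bar>k \<alpha> * c \<alpha> / (\<alpha> \<bullet> x)\<bar> \<le> C"
  shows "\<bar>\<Sum>\<alpha>\<in>Rp. k \<alpha> * (c \<alpha> / (\<alpha> \<bullet> x)) * (e / ((\<alpha> \<bullet> x)\<^sup>2 + e))\<bar> \<le> C * defect e x"
proof -
  have "\<bar>\<Sum>\<alpha>\<in>Rp. k \<alpha> * (c \<alpha> / (\<alpha> \<bullet> x)) * (e / ((\<alpha> \<bullet> x)\<^sup>2 + e))\<bar>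
      \<le> (\<Sum>\<alpha>\<in>Rp. \<bar>k \<alpha> * c \<alpha> / (\<alpha> \<bullet> x)\<bar> * (e / ((\<alpha> \<bullet> x)\<^sup>2 + e)))"
    using e by (intro order_trans[OF sum_abs] sum_mono) (simp add: abs_mult add_nonneg_pos)
  also have "\<dots> \<le> (\<Sum>\<alpha>\<in>Rp. C * (e / ((\<alpha> \<bullet> x)\<^sup>2 + e)))"
    using C e by (intro sum_mono mult_right_mono) (auto simp: add_nonneg_pos)
  finally show ?thesis by (simp add: defect_def sum_distrib_left)
qed

lemma error_term_bounded:
  assumes d: "0 < d" and T: "T < t0"
  obtains C where "C \<ge> 0"
    "\<And>e x t. 0 < e \<Longrightarrow> e \<le> 1 \<Longrightarrow> 0 < t \<Longrightarrow> t \<le> T \<Longrightarrow> regular x \<Longrightarrow> d \<le> cone_gap x t \<Longrightarrow>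
     \<bar>4 * cone_cutoff d x t * reg_weight e x * u_t (x, t)
        * (\<Sum>\<alpha>\<in>Rp. k \<alpha> * (Du (x, t) (\<alpha>, 0) / (\<alpha> \<bullet> x)) * (e / ((\<alpha> \<bullet> x)\<^sup>2 + e)))\<bar>
       \<le> C * defect e x"
proof -
  obtain Cq where Cq: "Cq \<ge> 0" "\<And>\<alpha> x t. \<alpha> \<in> Rp \<Longrightarrow> 0 < t \<Longrightarrow> t \<le> T \<Longrightarrow> d \<le> cone_gap x t \<Longrightarrow>
      \<alpha> \<bullet> x \<noteq> 0 \<Longrightarrow> \<bar>k \<alpha> * Du (x, t) (\<alpha>, 0) / (\<alpha> \<bullet> x)\<bar> \<le> Cq"
    using singular_term_bounded[OF d T] by blast
  obtain Bw where Bw: "Bw \<ge> 0" "\<And>x. x \<in> cball x0 t0 \<Longrightarrow> norm (reg_weight 1 x) \<le> Bw"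
    using continuous_on_compact_bound[OF compact_cball continuous_on_reg_weight[of 1 _ "\<lambda>x. x"]] by auto
  obtain Bu where Bu: "Bu \<ge> 0" "\<And>p. p \<in> cone_core d T \<Longrightarrow> norm (Du p) \<le> Bu"
    using continuous_on_compact_bound[OF compact_cone_core[OF d T]
        continuous_on_subset[OF continuous_on_Du cone_core_subset[OF d T]]] by blast
  show ?thesis
  proof (rule that[of "4 * (t0\<^sup>2)\<^sup>2 * Bw * Bu * Cq"])
    show "0 \<le> 4 * (t0\<^sup>2)\<^sup>2 * Bw * Bu * Cq" using Bw Bu Cq by simp
    fix e t :: real and x :: 'a
    assume e: "0 < e" "e \<le> 1" and t: "0 < t" "t \<le> T" and x: "regular x" "d \<le> cone_gap x t"
    have "norm (x - x0) < t0 - t" using norm_less_of_cone_gap_pos[of x t] t T x d by simp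
    then have "x \<in> cball x0 t0" using t by (simp add: dist_norm norm_minus_commute)
    then have w: "0 \<le> reg_weight e x" "reg_weight e x \<le> Bw"
      using reg_weight_pos[of e x] reg_weight_mono[of x e 1] e Bw(2)[of x] by auto
    have "\<bar>u_t (x, t)\<bar> \<le> norm (Du (x, t)) * norm (0::'a, 1::real)"
      unfolding u_t_def using norm_blinfun[of "Du (x, t)" "(0, 1)"] by simp
    also have "\<dots> \<le> Bu" using Bu(2)[of "(x, t)"] t x by (simp add: cone_core_def norm_Pair)
    finally have u: "\<bar>u_t (x, t)\<bar> \<le> Bu" .
    have psi: "0 \<le> cone_cutoff d x t" "cone_cutoff d x t \<le> (t0\<^sup>2)\<^sup>2"
      using cone_cutoff_le[of d t x] d t T by (auto simp: cone_cutoff_def cutoff_nonneg)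
    have S: "\<bar>\<Sum>\<alpha>\<in>Rp. k \<alpha> * (Du (x, t) (\<alpha>, 0) / (\<alpha> \<bullet> x)) * (e / ((\<alpha> \<bullet> x)\<^sup>2 + e))\<bar> \<le> Cq * defect e x"
      using Cq(2) t x by (intro abs_sum_regularized_singular_le[OF e(1) x(1)]) (auto simp: regular_def)
    show "\<bar>4 * cone_cutoff d x t * reg_weight e x * u_t (x, t)
        * (\<Sum>\<alpha>\<in>Rp. k \<alpha> * (Du (x, t) (\<alpha>, 0) / (\<alpha> \<bullet> x)) * (e / ((\<alpha> \<bullet> x)\<^sup>2 + e)))\<bar>
       \<le> 4 * (t0\<^sup>2)\<^sup>2 * Bw * Bu * Cq * defect e x"
      using mult_mono[OF mult_mono[OF mult_mono[OF psi(2) w(2)] u] S] psi w Bw Bu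
      by (simp add: abs_mult mult_ac)
  qed
qed

lemma energy_inequality:
  assumes d: "0 < d" and T: "T < t0"
  obtains C where "C \<ge> 0"
    "\<And>e x t. 0 < e \<Longrightarrow> e \<le> 1 \<Longrightarrow> 0 < t \<Longrightarrow> t \<le> T \<Longrightarrow> regular x \<Longrightarrow>
      energy_integrand_dt d e t x - 2 * (\<Sum>b\<in>Basis. flux_dx d e b t x) \<le> C * defect e x"
proof -
  obtain C where C: "C \<ge> 0" "\<And>e x t. 0 < e \<Longrightarrow> e \<le> 1 \<Longrightarrow> 0 < t \<Longrightarrow> t \<le> T \<Longrightarrow> regular x \<Longrightarrow>
      d \<le> cone_gap x t \<Longrightarrow> \<bar>4 * cone_cutoff d x t * reg_weight e x * u_t (x, t)
        * (\<Sum>\<alpha>\<in>Rp. k \<alpha> * (Du (x, t) (\<alpha>, 0) / (\<alpha> \<bullet> x)) * (e / ((\<alpha> \<bullet> x)\<^sup>2 + e)))\<bar>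
       \<le> C * defect e x"
    using error_term_bounded[OF d T] by blast
  show ?thesis
  proof (rule that[OF C(1)])
    fix e t :: real and x :: 'a
    assume e: "0 < e" "e \<le> 1" and t: "0 < t" "t \<le> T" and x: "regular x"
    show "energy_integrand_dt d e t x - 2 * (\<Sum>b\<in>Basis. flux_dx d e b t x) \<le> C * defect e x"
    proof (cases "d \<le> cone_gap x t")
      case True
      have "norm (x - x0) < t0 - t" using norm_less_of_cone_gap_pos[of x t] True d t T by simp
      then have xt: "(x, t) \<in> cone_interior" using t by (simp add: mem_cone_interior)
      show ?thesis
        using energy_identity[OF e(1) xt x, of d] C(2)[OF e t x True]
          cutoff_term_nonpos[OF cutoff'_nonneg[of d "cone_gap x t"] reg_weight_pos[of e x]
            less_imp_le[OF \<open>norm (x - x0) < t0 - t\<close>]]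
        by linarith
    next
      case False
      then have "energy_integrand_dt d e t x = 0" "\<And>b. flux_dx d e b t x = 0"
        by (auto simp: energy_integrand_dt_def flux_dx_def cone_cutoff_def cutoff_eq_0 cutoff'_eq_0)
      then show ?thesis using C(1) defect_nonneg[OF e(1), of x] by simp
    qed
  qed
qed

definition box :: "'a set" where
  "box = cbox (- ((norm x0 + t0 + 1) *\<^sub>R One)) ((norm x0 + t0 + 1) *\<^sub>R One)"

lemma cball_subset_box: "cball 0 (norm x0 + t0 + 1) \<subseteq> box"
  unfolding box_def by (rule cball_subset_symmetric_cbox)

lemma integrable_on_box: "continuous_on UNIV f \<Longrightarrow> (f :: 'a \<Rightarrow> real) integrable_on box"
  unfolding box_def by (rule integrable_continuous) (rule continuous_on_subset, auto)

lemma cone_gap_less_far: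
  assumes "norm x0 + t0 < norm x" "0 \<le> t" "t \<le> t0" "0 < d"
  shows "cone_gap x t < d"
proof -
  have "t0 < norm (x - x0)" using assms(1) norm_triangle_ineq2[of x x0] by linarith
  then have "t0\<^sup>2 < (norm (x - x0))\<^sup>2" using t0_pos by (intro power_strict_mono) auto
  moreover have "(t0 - t)\<^sup>2 \<le> t0\<^sup>2" using assms by (intro power_mono) auto
  ultimately show ?thesis using assms(4) by (simp add: cone_gap_def)
qed

lemma flux_eq_0_far: "0 < d \<Longrightarrow> 0 \<le> t \<Longrightarrow> t \<le> t0 \<Longrightarrow> x \<notin> cball 0 (norm x0 + t0) \<Longrightarrow> flux d e b t x = 0"
  and flux_dx_eq_0_far: "0 < d \<Longrightarrow> 0 \<le> t \<Longrightarrow> t \<le> t0 \<Longrightarrow> x \<notin> cball 0 (norm x0 + t0) \<Longrightarrow> flux_dx d e b t x = 0"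
  using cone_gap_less_far[of x t d]
  by (simp_all add: flux_def flux_dx_def cone_cutoff_def cutoff_eq_0 cutoff'_eq_0)

lemma integral_flux_dx:
  assumes d: "0 < d" and e: "0 < e" and T: "T < t0" and t: "0 < t" "t \<le> T" and b: "b \<in> Basis"
  shows "flux_dx d e b t integrable_on box" "integral box (flux_dx d e b t) = 0"
proof -
  have t': "0 \<le> t" "t \<le> T" using t by auto
  obtain B where B: "B \<ge> 0" "\<And>x. x \<in> cball 0 (norm x0 + t0) \<Longrightarrow> norm (flux_dx d e b t x) \<le> B"
    using continuous_on_compact_bound[OF compact_cball continuous_on_subset[OF continuous_on_flux_dx[OF d e T t']]]
    by blast
  have bound: "\<bar>flux_dx d e b t x\<bar> \<le> B" for x
    using B flux_dx_eq_0_far[OF d, of t x e b] t T by (cases "x \<in> cball 0 (norm x0 + t0)") auto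
  have "cball 0 (norm x0 + t0 + norm b) \<subseteq> box" using b cball_subset_box by simp
  from integral_directional_derivative_eq_0[OF continuous_on_flux[OF d e T t'] _
      has_real_derivative_flux[OF d e T t] bound this[unfolded box_def]]
  show "flux_dx d e b t integrable_on box" "integral box (flux_dx d e b t) = 0"
    using flux_eq_0_far[OF d t'(1)] t T by (auto simp: box_def)
qed

lemma continuous_on_defect: "0 < e \<Longrightarrow> continuous_on S (defect e)"
  unfolding defect_def[abs_def]
  by (intro continuous_intros) (metis add_nonneg_pos less_irrefl zero_le_power2)

text \<open>The flux terms integrate to zero, and off the negligible root hyperplanes the
  integrand is dominated by the defect.\<close>
lemma integral_energy_integrand_dt_le:
  assumes d: "0 < d" and e: "0 < e" "e \<le> 1" and T: "T < t0" and t: "0 < t" "t \<le> T"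
    and C: "\<And>x. regular x \<Longrightarrow> energy_integrand_dt d e t x - 2 * (\<Sum>b\<in>Basis. flux_dx d e b t x) \<le> C * defect e x"
  shows "integral box (energy_integrand_dt d e t) \<le> C * integral box (defect e)"
proof -
  define F where "F x = energy_integrand_dt d e t x - 2 * (\<Sum>b\<in>Basis. flux_dx d e b t x)" for x
  have flux: "(\<lambda>x. \<Sum>b\<in>Basis. flux_dx d e b t x) integrable_on box"
    "integral box (\<lambda>x. \<Sum>b\<in>Basis. flux_dx d e b t x) = 0"
    using integral_flux_dx[OF d e(1) T t] by (auto intro: integrable_sum simp: integral_sum)
  have "continuous_on UNIV (\<lambda>x. (\<lambda>(t, x). energy_integrand_dt d e t x) (t, x))"
    by (rule continuous_on_compose2[OF continuous_on_energy_integrand_dt[OF d e(1) T]])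
       (use t in \<open>auto intro: continuous_intros\<close>)
  then have "energy_integrand_dt d e t integrable_on box" by (intro integrable_on_box) simp
  then have F: "F integrable_on box" "integral box F = integral box (energy_integrand_dt d e t)"
    using flux unfolding F_def by (auto intro!: integrable_diff integrable_cmul simp: integral_diff)
  have defect: "(\<lambda>x. C * defect e x) integrable_on box"
    using integrable_cmul[OF integrable_on_box[OF continuous_on_defect[OF e(1)]], of C] by simp
  have "integral box F \<le> integral box (\<lambda>x. C * defect e x)"
    by (rule integral_le_off_negligible[OF negligible_irregular F(1) defect]) (use C in \<open>auto simp: F_def\<close>)
  then show ?thesis using F(2) by simp
qed

lemma u_x_initial:
  assumes "norm (x - x0) < t0"
  shows "Du (x, 0) (b, 0) = 0"
proof -
  define N where "N = {r. norm (x + r *\<^sub>R b - x0) < t0}"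
  have N: "open N" "0 \<in> N" using assms unfolding N_def by (auto intro!: open_Collect_less continuous_intros)
  have "((\<lambda>r. u ((x, 0) + r *\<^sub>R (b, 0))) has_real_derivative Du (x, 0) (b, 0)) (at 0 within N)"
    using assms u_deriv by (intro has_real_derivative_along_line[where S=cone]) (auto simp: N_def light_cone_def)
  then have "((\<lambda>r. u (x + r *\<^sub>R b, 0)) has_real_derivative Du (x, 0) (b, 0)) (at 0)"
    using at_within_open[OF N(2,1)] by (simp add: N_def)
  moreover have "((\<lambda>r. u (x + r *\<^sub>R b, 0)) has_real_derivative 0) (at 0)"
    by (rule has_field_derivative_transform_within_open[OF DERIV_const N(1,2)]) (use initial in \<open>auto simp: N_def\<close>)
  ultimately show ?thesis by (rule DERIV_unique)
qed

lemma energy_integrand_initial: "0 < d \<Longrightarrow> energy_integrand d e 0 x = 0"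
proof (cases "cone_gap x 0 < d")
  case False
  assume "0 < d"
  then have "norm (x - x0) < t0" using False norm_less_of_cone_gap_pos[of x 0] t0_pos by simp
  then show ?thesis using initial u_x_initial by (simp add: energy_integrand_def energy_density_def u_t_def u_x_def)
qed (simp add: energy_integrand_def cone_cutoff_def cutoff_eq_0)

lemma energy_le:
  assumes d: "0 < d" and T: "T < t0" and e: "0 < e" "e \<le> 1" and t1: "0 < t1" "t1 \<le> T"
    and C: "\<And>t x. 0 < t \<Longrightarrow> t \<le> T \<Longrightarrow> regular x \<Longrightarrow>
      energy_integrand_dt d e t x - 2 * (\<Sum>b\<in>Basis. flux_dx d e b t x) \<le> C * defect e x"
  shows "integral box (energy_integrand d e t1) \<le> t1 * (C * integral box (defect e))"
proof -
  define E where "E t = integral box (energy_integrand d e t)" for t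
  obtain a b where box_eq: "box = cbox a b" by (simp add: box_def)
  have "(E has_real_derivative integral box (energy_integrand_dt d e t)) (at t within {0..t1})"
    if "t \<in> {0..t1}" for t
    unfolding E_def box_eq
  proof (rule leibniz_rule_field_derivative)
    show "((\<lambda>s. energy_integrand d e s x) has_real_derivative energy_integrand_dt d e s x) (at s within {0..t1})"
      if "s \<in> {0..t1}" for s x
      using that t1 by (intro has_field_derivative_subset[OF has_real_derivative_energy_integrand[OF d T]]) auto
    show "energy_integrand d e s integrable_on cbox a b" if "s \<in> {0..t1}" for s
      using that t1 unfolding box_eq[symmetric] by (intro integrable_on_box continuous_on_energy_integrand[OF d e(1) T]) auto
    show "continuous_on ({0..t1} \<times> cbox a b) (\<lambda>(s, x). energy_integrand_dt d e s x)"
      using t1 by (intro continuous_on_subset[OF continuous_on_energy_integrand_dt[OF d e(1) T]]) auto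
  qed (use that in auto)
  then have "(E has_derivative (\<lambda>h. h * integral box (energy_integrand_dt d e t))) (at t within {0..t1})"
    if "0 \<le> t" "t \<le> t1" for t
    using that by (simp add: has_field_derivative_def mult_commute_abs)
  from mvt_simple[OF t1(1) this] obtain \<xi> where
    \<xi>: "0 < \<xi>" "\<xi> < t1" "E t1 - E 0 = t1 * integral box (energy_integrand_dt d e \<xi>)"
    by auto
  have "energy_integrand d e 0 = (\<lambda>x. 0)" using energy_integrand_initial[OF d] by (simp add: fun_eq_iff)
  then have "E 0 = 0" by (simp add: E_def)
  moreover have "integral box (energy_integrand_dt d e \<xi>) \<le> C * integral box (defect e)"
    using \<xi> t1 by (intro integral_energy_integrand_dt_le[OF d e T] C) auto
  ultimately show ?thesis using \<xi> t1 unfolding E_def by (simp add: mult_left_mono)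
qed

lemma integral_defect_tendsto_0: "(\<lambda>n. integral box (defect (1 / real (Suc n)))) \<longlonglongrightarrow> 0"
proof -
  define f where "f n x = (if regular x then defect (1 / real (Suc n)) x else 0)" for n x
  have "integral box (defect (1 / real (Suc n))) = integral box (f n)" for n
    by (rule integral_spike[OF negligible_irregular]) (auto simp: f_def)
  moreover have f_int: "f n integrable_on box" for n
    using integrable_on_box[OF continuous_on_defect] negligible_irregular
    by (rule integrable_spike) (auto simp: f_def)
  moreover have "norm (f n x) \<le> real (card Rp)" for n x
  proof -
    have le1: "e / (a + e) \<le> 1" if "0 < e" "0 \<le> a" for e a :: real using that by simp
    have "defect (1 / real (Suc n)) x \<le> (\<Sum>\<alpha>\<in>Rp. 1)"
      unfolding defect_def by (intro sum_mono le1) auto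
    then show ?thesis using defect_nonneg[of "1 / real (Suc n)" x] by (simp add: f_def)
  qed
  moreover have "(\<lambda>n. f n x) \<longlonglongrightarrow> 0" for x
  proof (cases "regular x")
    case True
    have "(\<lambda>n. \<Sum>\<alpha>\<in>Rp. 1 / real (Suc n) / ((\<alpha> \<bullet> x)\<^sup>2 + 1 / real (Suc n))) \<longlonglongrightarrow> (\<Sum>\<alpha>\<in>Rp. 0 / ((\<alpha> \<bullet> x)\<^sup>2 + 0))"
      using True LIMSEQ_inverse_real_of_nat
      by (intro tendsto_sum tendsto_divide tendsto_add tendsto_const) (auto simp: regular_def inverse_eq_divide)
    then show ?thesis using True by (simp add: f_def defect_def)
  qed (simp add: f_def)
  ultimately show ?thesis
    using dominated_convergence(2)[of f box "\<lambda>x. real (card Rp)" "\<lambda>x. 0"] integrable_on_box[OF continuous_on_const]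
    by simp
qed

lemma isCont_reg_weight_0: "regular x \<Longrightarrow> isCont (reg_weight 0) x"
  unfolding reg_weight_def[abs_def] by (intro continuous_intros) (auto simp: regular_def)

lemma ball_subset_box: "(x, t) \<in> cone_interior \<Longrightarrow> ball x 1 \<subseteq> box"
proof
  fix y assume "(x, t) \<in> cone_interior" "y \<in> ball x 1"
  then have "norm y < norm x + 1" "norm x < norm x0 + t0"
    using norm_triangle_ineq2[of y x] norm_triangle_ineq2[of x x0]
    by (auto simp: dist_norm norm_minus_commute mem_cone_interior)
  then show "y \<in> box" using cball_subset_box by auto
qed

lemma isCont_weighted_energy:
  assumes xt: "(x, t) \<in> cone_interior" and x: "regular x"
  shows "isCont (\<lambda>y. cone_cutoff d y t * reg_weight 0 y * energy_density (y, t)) x"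
proof -
  have "isCont (\<lambda>y. Du (y, t)) x"
    using isCont_o2[where f="\<lambda>y. (y, t)" and a=x and g=Du] isCont_Du[OF xt] by (simp add: continuous_intros)
  moreover have "continuous_on UNIV (\<lambda>y. cutoff d (cone_gap y t))"
    by (rule continuous_on_compose2[OF continuous_on_cutoff continuous_on_cone_gap]) auto
  ultimately show ?thesis
    unfolding energy_density_def u_t_def u_x_def cone_cutoff_def
    by (intro continuous_intros blinfun.continuous isCont_reg_weight_0[OF x])
       (auto simp: continuous_on_eq_continuous_at)
qed

text \<open>The bound is uniform in \<open>\<epsilon>\<close> because \<open>reg_weight 0 \<le> reg_weight \<epsilon>\<close> at regular points.\<close>
lemma energy_integrand_lower_bound:
  assumes xt: "(x, t) \<in> cone_interior" and x: "regular x" and ut: "u_t (x, t) \<noteq> 0"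
    and d: "0 < d" "d < cone_gap x t"
  obtains c where "0 < c" "\<And>e. 0 < e \<Longrightarrow> c \<le> integral box (energy_integrand d e t)"
proof -
  have t: "0 < t" "t < t0" using xt norm_ge_zero[of "x - x0"] unfolding mem_cone_interior by linarith+
  define g where "g y = cone_cutoff d y t * reg_weight 0 y * energy_density (y, t)" for y
  have "continuous (at x) g" unfolding g_def by (rule isCont_weighted_energy[OF xt x])
  moreover have "0 < g x"
    using d ut x by (simp add: g_def cone_cutoff_def cutoff_def reg_weight_def energy_density_def add_pos_nonneg sum_nonneg)
  moreover have "open ({y. regular y} \<inter> ball x 1)" using open_regular by blast
  ultimately obtain a b where ab: "cbox a b \<subseteq> {y. regular y} \<inter> ball x 1" "0 < measure lborel (cbox a b)"
    "\<And>y. y \<in> cbox a b \<Longrightarrow> g x / 2 < g y"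
    using x by (elim exists_cbox_where_gt_half) auto
  have ab_box: "cbox a b \<subseteq> box" using ab(1) ball_subset_box[OF xt] by blast
  obtain c c' where box_eq: "box = cbox c c'" by (simp add: box_def)
  show ?thesis
  proof (rule that[of "g x / 2 * measure lborel (cbox a b)"])
    show "0 < g x / 2 * measure lborel (cbox a b)" using \<open>0 < g x\<close> ab(2) by simp
    fix e :: real assume e: "0 < e"
    have nonneg: "0 \<le> energy_integrand d e t y" for y
      using reg_weight_pos[of e y] cutoff_nonneg[of d "cone_gap y t"] energy_density_nonneg
      by (simp add: energy_integrand_def cone_cutoff_def)
    have "g y \<le> energy_integrand d e t y" if "y \<in> cbox a b" for y
      using reg_weight_mono[of y 0 e] ab(1) that e cutoff_nonneg[of d "cone_gap y t"] energy_density_nonneg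
      by (auto simp: g_def energy_integrand_def cone_cutoff_def intro!: mult_right_mono mult_left_mono)
    then have "g x / 2 \<le> energy_integrand d e t y" if "y \<in> cbox a b" for y
      using ab(3)[OF that] that by fastforce
    then show "g x / 2 * measure lborel (cbox a b) \<le> integral box (energy_integrand d e t)"
      using ab_box nonneg integrable_on_box[OF continuous_on_energy_integrand[OF d(1) e t(2)]] t
      unfolding box_eq by (intro mult_measure_le_integral) auto
  qed
qed

lemma u_t_eq_0_regular:
  assumes xt: "(x, t) \<in> cone_interior" and x: "regular x"
  shows "u_t (x, t) = 0"
proof (rule ccontr)
  assume ut: "u_t (x, t) \<noteq> 0"
  have "norm (x - x0) < t0 - t" and t: "0 < t" "t < t0"
    using xt norm_ge_zero[of "x - x0"] unfolding mem_cone_interior by linarith+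
  then have "(norm (x - x0))\<^sup>2 < (t0 - t)\<^sup>2" by (intro power_strict_mono) auto
  then have d: "0 < cone_gap x t / 2" "cone_gap x t / 2 < cone_gap x t" by (simp_all add: cone_gap_def)
  obtain c where c: "0 < c" "\<And>e. 0 < e \<Longrightarrow> c \<le> integral box (energy_integrand (cone_gap x t / 2) e t)"
    using energy_integrand_lower_bound[OF xt x ut d] by metis
  obtain C where "C \<ge> 0" and C: "\<And>e y s. 0 < e \<Longrightarrow> e \<le> 1 \<Longrightarrow> 0 < s \<Longrightarrow> s \<le> t \<Longrightarrow> regular y \<Longrightarrow>
      energy_integrand_dt (cone_gap x t / 2) e s y - 2 * (\<Sum>b\<in>Basis. flux_dx (cone_gap x t / 2) e b s y)
        \<le> C * defect e y"
    using energy_inequality[OF d(1) t(2)] by blast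
  have energy: "integral box (energy_integrand (cone_gap x t / 2) e t) \<le> t * (C * integral box (defect e))"
    if e: "0 < e" "e \<le> 1" for e
    by (rule energy_le[OF d(1) t(2) e t(1) order_refl]) (rule C[OF e])
  have lower: "c \<le> t * (C * integral box (defect (1 / real (Suc n))))" for n
  proof -
    have e: "0 < 1 / real (Suc n)" "1 / real (Suc n) \<le> 1" by auto
    show ?thesis using order_trans[OF c(2)[OF e(1)] energy[OF e]] .
  qed
  have "(\<lambda>n. t * (C * integral box (defect (1 / real (Suc n))))) \<longlonglongrightarrow> t * (C * 0)"
    by (intro tendsto_intros integral_defect_tendsto_0)
  then have "c \<le> t * (C * 0)" by (rule LIMSEQ_le_const) (use lower in auto)
  then show False using c(1) by simp
qed

lemma u_t_eq_0:
  assumes xt: "(x, t) \<in> cone_interior"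
  shows "u_t (x, t) = 0"
proof -
  obtain v where v: "\<forall>\<alpha>\<in>R. \<alpha> \<bullet> v \<noteq> 0" using positive by (auto simp: positive_subsystem_def)
  have "\<forall>\<^sub>F n in sequentially. \<forall>\<alpha>\<in>Rp. \<alpha> \<bullet> (x + (1 / real (Suc n)) *\<^sub>R v) \<noteq> 0"
    using v Rp_subset by (intro eventually_inner_add_scaleR_inverse_Suc_nonzero[OF finite_Rp]) auto
  with eventually_add_scaleR_inverse_Suc_in_open[OF open_cone_interior xt, of v]
  have "\<forall>\<^sub>F n in sequentially. u_t (x + (1 / real (Suc n)) *\<^sub>R v, t) = 0"
    by eventually_elim (auto intro: u_t_eq_0_regular simp: regular_def)
  then show ?thesis
    unfolding u_t_def
    by (intro isCont_eventually_zero_imp_zero[where v=v] continuous_intros blinfun.continuous isCont_Du[OF xt])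
qed

theorem u_eq_0: "p \<in> cone \<Longrightarrow> u p = 0"
proof (cases p)
  case (Pair x t)
  assume "p \<in> cone"
  then have t: "0 \<le> t" and x: "norm (x - x0) \<le> t0 - t" by (auto simp: Pair light_cone_def)
  have "u (x, t) = u (x, 0)"
  proof (cases "t = 0")
    case False
    show ?thesis
    proof (rule DERIV_isconst_end[of 0 t "\<lambda>s. u (x, s)"])
      show "continuous_on {0..t} (\<lambda>s. u (x, s))"
        using x by (intro continuous_on_compose2[OF continuous_on_u] continuous_intros) (auto simp: light_cone_def)
      fix s assume s: "0 < s" "s < t"
      then have xs: "(x, s) \<in> cone_interior" using x by (simp add: mem_cone_interior)
      have "(u has_derivative blinfun_apply (Du (x, s))) (at ((x, 0) + s *\<^sub>R (0, 1)) within UNIV)"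
        using u_has_derivative_at[OF xs] by simp
      from has_real_derivative_along_line[OF this, of UNIV]
      have "((\<lambda>r. u ((x, 0) + r *\<^sub>R (0, 1))) has_real_derivative Du (x, s) (0, 1)) (at s)" by simp
      then show "((\<lambda>s. u (x, s)) has_real_derivative 0) (at s)"
        using u_t_eq_0[OF xs] by (simp add: u_t_def)
    qed (use False t in auto)
  qed simp
  also have "\<dots> = 0" using initial x t by auto
  finally show ?thesis by (simp add: Pair)
qed

end

theorem mainTheorem7:
  fixes R Rp :: "'a::euclidean_space set"
    and k :: "'a \<Rightarrow> real"
    and x0 :: 'a and t0 :: real
    and u :: "'a \<times> real \<Rightarrow> real"
    and Du :: "'a \<times> real \<Rightarrow> ('a \<times> real) \<Rightarrow>\<^sub>L real"
    and D2u :: "'a \<times> real \<Rightarrow> ('a \<times> real) \<Rightarrow>\<^sub>L (('a \<times> real) \<Rightarrow>\<^sub>L real)"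
  assumes "normalized_reduced_root_system R"
    and "positive_subsystem R Rp"
    and "multiplicity_function R k"
    and "t0 > 0"
    and "\<forall>p\<in>light_cone x0 t0. (u has_derivative blinfun_apply (Du p)) (at p within light_cone x0 t0)"
    and "\<forall>p\<in>light_cone x0 t0. (Du has_derivative blinfun_apply (D2u p)) (at p within light_cone x0 t0)"
    and "continuous_on (light_cone x0 t0) D2u"
    and "\<forall>p\<in>light_cone x0 t0. (\<forall>\<alpha>\<in>R. \<alpha> \<bullet> fst p \<noteq> 0) \<longrightarrow> dunkl_wave_op Rp k Du D2u p = 0"
    and "\<forall>x. norm (x - x0) \<le> t0 \<longrightarrow> u (x, 0) = 0 \<and> Du (x, 0) (0, 1) = 0"
  shows "\<forall>p\<in>light_cone x0 t0. u p = 0"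
proof -
  interpret dunkl_wave_cone R Rp k x0 t0 u Du D2u
    by (rule dunkl_wave_cone.intro) (rule assms)+
  show ?thesis using u_eq_0 by blast
qed

end
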